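(* Let the setting and the algorithm RandProx-ADMM be as in the context. Suppose that $\mu_g>0$, $\mu_{h^*}>0$ and $\gamma>0$, and set $\tau:=\frac{1}{\gamma(1+\omega)}$. For $t\ge0$ let $\Psi^t:=\frac{1}{\gamma}\|x^t-x^\star\|^2+(1+\omega)\big(\gamma(1+\omega)+2\mu_{h^*}\big)\|u^t-u^\star\|^2$, where $x^\star,u^\star$ are the unique solutions of the primal and dual problems. Then for every $t\ge0$, $\mathbb{E}[\Psi^t]\le c^t\Psi^0$, where $$c:=\max\left(\frac{1}{1+\gamma\mu_g},\ 1-\frac{2\tau\mu_{h^*}}{(1+\omega)(1+2\tau\mu_{h^*})}\right)=1-\min\left(\frac{\gamma\mu_g}{1+\gamma\mu_g},\ \frac{2\tau\mu_{h^*}}{(1+\omega)(1+2\tau\mu_{h^*})}\right)<1.$$ Moreover, $(x^t)$ and $(\hat{x}^t)$ both converge to $x^\star$ and $(u^t)$ converges to $u^\star$, almost surely.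
   Context: $\mathcal{X}$ is a finite-dimensional real Hilbert space; $g,h:\mathcal{X}\to\mathbb{R}\cup\{+\infty\}$ proper closed convex; $g$ is $\mu_g$-strongly convex and $h^*$ (conjugate of $h$) is $\mu_{h^*}$-strongly convex (a convex $\phi$ is $\mu$-strongly convex if $\phi-\frac{\mu}{2}\|\cdot\|^2$ is convex). $\mathrm{prox}_{\gamma\phi}(x):=\arg\min_{x'}(\gamma\phi(x')+\frac12\|x'-x\|^2)$. Primal problem: minimize $g(x)+h(x)$; dual: minimize $g^*(-u)+h^*(u)$. It is assumed there exists $(x^\star,u^\star)$ with $0\in\partial g(x^\star)+u^\star$, $x^\star\in\partial h^*(u^\star)$. Algorithm RandProx-ADMM: inputs $x^0,u^0\in\mathcal{X}$, $\gamma>0$, $\omega\ge0$; for $t\ge0$: $\hat{x}^t:=\mathrm{prox}_{\gamma g}(x^t-\gamma u^t)$; $d^t:=\mathcal{R}^t\big(\hat{x}^t-\mathrm{prox}_{\gamma(1+\omega)h}(\hat{x}^t+\gamma(1+\omega)u^t)\big)$; $x^{t+1}:=\hat{x}^t-\frac{1}{1+\omega}d^t$; $u^{t+1}:=u^t+\frac{1}{\gamma(1+\omega)^2}d^t$. With $\mathcal{F}_t$ the $\sigma$-algebra generated by $(x^0,u^0),\dots,(x^t,u^t)$ and $r^t:=\hat{x}^t-\mathrm{prox}_{\gamma(1+\omega)h}(\hat{x}^t+\gamma(1+\omega)u^t)$, the random estimate satisfies $\mathbb{E}[\mathcal{R}^t(r^t)\mid\mathcal{F}_t]=r^t$ and $\mathbb{E}[\|\mathcal{R}^t(r^t)-r^t\|^2\mid\mathcal{F}_t]\le\omega\|r^t\|^2$.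 *)

theory Defs
  imports "HOL-Analysis.Analysis" "HOL-Probability.Probability"
begin

definition proper_fun :: "('a::euclidean_space \<Rightarrow> ereal) \<Rightarrow> bool" where
  "proper_fun f \<longleftrightarrow> (\<forall>x. f x \<noteq> -\<infinity>) \<and> (\<exists>x. f x < \<infinity>)"

definition closed_fun :: "('a::euclidean_space \<Rightarrow> ereal) \<Rightarrow> bool" where
  "closed_fun f \<longleftrightarrow> closed {(x, y::real). f x \<le> ereal y}"

definition convex_fun :: "('a::euclidean_space \<Rightarrow> ereal) \<Rightarrow> bool" where
  "convex_fun f \<longleftrightarrow> (\<forall>x y. \<forall>t::real. 0 \<le> t \<and> t \<le> 1 \<longrightarrow>
      f ((1 - t) *\<^sub>R x + t *\<^sub>R y) \<le> ereal (1 - t) * f x + ereal t * f y)"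

definition strongly_convex_fun :: "real \<Rightarrow> ('a::euclidean_space \<Rightarrow> ereal) \<Rightarrow> bool" where
  "strongly_convex_fun \<mu> f \<longleftrightarrow> convex_fun (\<lambda>x. f x - ereal (\<mu> / 2 * (norm x)\<^sup>2))"

definition conj_fun :: "('a::euclidean_space \<Rightarrow> ereal) \<Rightarrow> 'a \<Rightarrow> ereal" where
  "conj_fun f u = (SUP x. ereal (inner u x) - f x)"

definition subdiff :: "('a::euclidean_space \<Rightarrow> ereal) \<Rightarrow> 'a \<Rightarrow> 'a set" where
  "subdiff f x = {v. \<bar>f x\<bar> \<noteq> \<infinity> \<and> (\<forall>y. f x + ereal (inner v (y - x)) \<le> f y)}"

definition prox :: "real \<Rightarrow> ('a::euclidean_space \<Rightarrow> ereal) \<Rightarrow> 'a \<Rightarrow> 'a" where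
  "prox \<gamma> \<phi> x = (SOME p. \<forall>y. ereal \<gamma> * \<phi> p + ereal ((norm (p - x))\<^sup>2 / 2)
                              \<le> ereal \<gamma> * \<phi> y + ereal ((norm (y - x))\<^sup>2 / 2))"

definition rp_xhat :: "real \<Rightarrow> ('a::euclidean_space \<Rightarrow> ereal) \<Rightarrow> 'a \<Rightarrow> 'a \<Rightarrow> 'a" where
  "rp_xhat \<gamma> g x u = prox \<gamma> g (x - \<gamma> *\<^sub>R u)"

definition rp_res :: "real \<Rightarrow> real \<Rightarrow> ('a::euclidean_space \<Rightarrow> ereal) \<Rightarrow> ('a \<Rightarrow> ereal) \<Rightarrow> 'a \<Rightarrow> 'a \<Rightarrow> 'a" where
  "rp_res \<gamma> \<omega> g h x u =
     rp_xhat \<gamma> g x u - prox (\<gamma> * (1 + \<omega>)) h (rp_xhat \<gamma> g x u + (\<gamma> * (1 + \<omega>)) *\<^sub>R u)"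

text \<open>Iterates \<open>(x^t, u^t)\<close> as functions of the sample point; \<open>R t s\<close> is the
  random operator \<open>\<R>^t\<close> at sample point \<open>s\<close>.\<close>
primrec rp_iter :: "real \<Rightarrow> real \<Rightarrow> ('a::euclidean_space \<Rightarrow> ereal) \<Rightarrow> ('a \<Rightarrow> ereal)
    \<Rightarrow> (nat \<Rightarrow> 's \<Rightarrow> 'a \<Rightarrow> 'a) \<Rightarrow> 'a \<Rightarrow> 'a \<Rightarrow> nat \<Rightarrow> 's \<Rightarrow> 'a \<times> 'a" where
  "rp_iter \<gamma> \<omega> g h R x0 u0 0 s = (x0, u0)"
| "rp_iter \<gamma> \<omega> g h R x0 u0 (Suc t) s =
    (case rp_iter \<gamma> \<omega> g h R x0 u0 t s of (x, u) \<Rightarrow>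
       (let d = R t s (rp_res \<gamma> \<omega> g h x u)
        in (rp_xhat \<gamma> g x u - (1 / (1 + \<omega>)) *\<^sub>R d,
            u + (1 / (\<gamma> * (1 + \<omega>)\<^sup>2)) *\<^sub>R d)))"

definition rp_x where "rp_x \<gamma> \<omega> g h R x0 u0 t s = fst (rp_iter \<gamma> \<omega> g h R x0 u0 t s)"
definition rp_u where "rp_u \<gamma> \<omega> g h R x0 u0 t s = snd (rp_iter \<gamma> \<omega> g h R x0 u0 t s)"

definition rp_filt :: "'s measure \<Rightarrow> (nat \<Rightarrow> 's \<Rightarrow> 'a::euclidean_space) \<Rightarrow> (nat \<Rightarrow> 's \<Rightarrow> 'a) \<Rightarrow> nat \<Rightarrow> 's measure" where
  "rp_filt M X U t = sigma (space M)
     {(\<lambda>s. (X k s, U k s)) -` A \<inter> space M | k A. k \<le> t \<and> A \<in> sets borel}"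

end

theory Submission
  imports Defs
begin

text \<open>Write \<open>xh = prox \<gamma> g (x - \<gamma> u)\<close> and \<open>r\<close> for the residual of the step. Strong
  monotonicity of the subdifferential of \<open>g\<close> (between \<open>xh\<close> and \<open>x\<^sup>\<star>\<close>) and of that of
  \<open>h\<^sup>*\<close> (between \<open>u + r / (\<gamma> (1 + \<omega>))\<close> and \<open>u\<^sup>\<star>\<close>), combined with an exact quadratic
  identity, shows that the noiseless step (the estimate \<open>d\<close> replaced by \<open>r\<close>) satisfies
  \<open>\<Psi>\<^sup>+ + \<omega> \<kappa> \<parallel>r\<parallel>\<^sup>2 \<le> c \<Psi>\<close>, where \<open>\<kappa>\<close> is the weight of \<open>\<parallel>d - r\<parallel>\<^sup>2\<close> in \<open>\<Psi>\<close> at the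
  next iterate. Since \<open>\<Psi>\<close> is quadratic and the estimate is conditionally
  unbiased, the conditional expectation of \<open>\<Psi>\<close> at the actual next iterate exceeds the noiseless
  value by \<open>\<kappa> E \<parallel>d - r\<parallel>\<^sup>2 \<le> \<kappa> \<omega> \<parallel>r\<parallel>\<^sup>2\<close>, which the contraction absorbs; hence
  \<open>E \<Psi>\<^sup>t \<le> c\<^sup>t \<Psi>\<^sup>0\<close>. Then \<open>\<Sum>\<^sub>t \<Psi>\<^sup>t < \<infinity>\<close> almost surely, so \<open>\<Psi>\<^sup>t \<longrightarrow> 0\<close>, and \<open>xh\<close>
  converges by continuity of the prox and the fixed point \<open>x\<^sup>\<star> = prox \<gamma> g (x\<^sup>\<star> - \<gamma> u\<^sup>\<star>)\<close>.
  Strong convexity of \<open>g\<close> and \<open>h\<^sup>*\<close> makes the KKT point unique, so it is the given pair of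
  primal and dual solutions.\<close>

section \<open>Subdifferentials and strong convexity\<close>

lemma nonneg_if_perturbations_nonneg:
  fixes A C :: real
  assumes "\<And>t. 0 < t \<Longrightarrow> t < 1 \<Longrightarrow> 0 \<le> A + t * C"
  shows "0 \<le> A"
proof -
  have "((\<lambda>t. A + t * C) \<longlongrightarrow> A + 0 * C) (at_right 0)"
    by (intro tendsto_intros)
  moreover have "\<forall>\<^sub>F t in at_right 0. 0 \<le> A + t * C"
    using eventually_at_right_real[of 0 1] by (rule eventually_mono) (use assms in auto)
  ultimately show ?thesis
    by (auto intro: tendsto_lowerbound)
qed

lemma subdiffE:
  assumes "v \<in> subdiff f x"
  obtains fx where "f x = ereal fx" "\<And>y. ereal (fx + inner v (y - x)) \<le> f y"
proof -
  from assms have fin: "\<bar>f x\<bar> \<noteq> \<infinity>" and le: "\<And>y. f x + ereal (inner v (y - x)) \<le> f y"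
    by (auto simp: subdiff_def)
  obtain fx where "f x = ereal fx" using fin by (cases "f x") auto
  with le show ?thesis using that by (metis plus_ereal.simps(1))
qed

lemma subdiffI:
  assumes "f x = ereal fx" "\<And>y. ereal (fx + inner v (y - x)) \<le> f y"
  shows "v \<in> subdiff f x"
  using assms by (auto simp: subdiff_def)

lemma subdiff_conj_fun:
  assumes "v \<in> subdiff f x"
  shows "x \<in> subdiff (conj_fun f) v"
proof -
  obtain fx where fx: "f x = ereal fx" and le: "\<And>y. ereal (fx + inner v (y - x)) \<le> f y"
    using subdiffE[OF assms] by blast
  have "conj_fun f v = ereal (inner v x - fx)"
    unfolding conj_fun_def
  proof (rule antisym)
    show "(SUP y. ereal (inner v y) - f y) \<le> ereal (inner v x - fx)"
    proof (rule SUP_least)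
      fix y
      show "ereal (inner v y) - f y \<le> ereal (inner v x - fx)"
        using le[of y] by (cases "f y") (auto simp: inner_diff_right)
    qed
    show "ereal (inner v x - fx) \<le> (SUP y. ereal (inner v y) - f y)"
      by (rule SUP_upper2[of x]) (auto simp: fx)
  qed
  moreover have "ereal (inner v x - fx + inner x (w - v)) \<le> conj_fun f w" for w
  proof -
    have "ereal (inner v x - fx + inner x (w - v)) = ereal (inner w x) - f x"
      by (simp add: fx inner_diff_right inner_commute)
    also have "\<dots> \<le> conj_fun f w"
      unfolding conj_fun_def by (rule SUP_upper) simp
    finally show ?thesis .
  qed
  ultimately show ?thesis
    by (rule subdiffI)
qed

lemma subdiff_reflect:
  assumes "v \<in> subdiff f (- x)"
  shows "- v \<in> subdiff (\<lambda>y. f (- y)) x"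
proof -
  obtain fx where fx: "f (- x) = ereal fx" and le: "\<And>y. ereal (fx + inner v (y - - x)) \<le> f y"
    using subdiffE[OF assms] by blast
  show ?thesis
  proof (rule subdiffI[of _ _ fx])
    fix y
    show "ereal (fx + inner (- v) (y - x)) \<le> f (- y)"
      using le[of "- y"] by (simp add: inner_diff_right)
  qed (simp add: fx)
qed

lemma strongly_convex_subdiff_ineq:
  assumes sc: "strongly_convex_fun \<mu> f" and v: "v \<in> subdiff f x" and fx: "f x = ereal fx"
  shows "ereal (fx + inner v (y - x) + \<mu> / 2 * (norm (y - x))\<^sup>2) \<le> f y"
proof (cases "f y")
  case PInf
  then show ?thesis by simp
next
  case MInf
  moreover have "ereal (fx + inner v (y - x)) \<le> f y"
    using subdiffE[OF v] fx by (metis ereal.inject)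
  ultimately show ?thesis by simp
next
  case (real fy)
  have "0 \<le> (fy - fx - inner v (y - x) - \<mu> / 2 * (norm (y - x))\<^sup>2) + t * (\<mu> / 2 * (norm (y - x))\<^sup>2)"
    if t: "0 < t" "t < 1" for t
  proof -
    define z where "z = (1 - t) *\<^sub>R x + t *\<^sub>R y"
    have cv: "f z - ereal (\<mu> / 2 * (norm z)\<^sup>2) \<le> ereal (1 - t) * (f x - ereal (\<mu> / 2 * (norm x)\<^sup>2))
               + ereal t * (f y - ereal (\<mu> / 2 * (norm y)\<^sup>2))"
      using sc t unfolding strongly_convex_fun_def convex_fun_def z_def by auto
    have "z - x = t *\<^sub>R (y - x)"
      by (simp add: z_def algebra_simps)
    then have lz: "ereal (fx + t * inner v (y - x)) \<le> f z"
      using subdiffE[OF v] fx by (metis ereal.inject inner_scaleR_right)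
    obtain fz where fz: "f z = ereal fz"
      using cv lz by (cases "f z") (auto simp: fx real)
    have norm_z: "(norm z)\<^sup>2 = (1 - t) * (norm x)\<^sup>2 + t * (norm y)\<^sup>2 - t * (1 - t) * (norm (y - x))\<^sup>2"
      unfolding z_def power2_norm_eq_inner
      by (simp add: inner_add_left inner_add_right inner_diff_left inner_diff_right inner_commute algebra_simps)
    from cv lz have "fx + t * inner v (y - x) - \<mu> / 2 * (norm z)\<^sup>2
        \<le> (1 - t) * (fx - \<mu> / 2 * (norm x)\<^sup>2) + t * (fy - \<mu> / 2 * (norm y)\<^sup>2)"
      by (simp add: fz fx real)
    then have "t * (\<mu> / 2 * ((1 - t) * (norm (y - x))\<^sup>2)) \<le> t * (fy - fx - inner v (y - x))"
      unfolding norm_z by (simp add: algebra_simps diff_divide_distrib)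
    then have "\<mu> / 2 * ((1 - t) * (norm (y - x))\<^sup>2) \<le> fy - fx - inner v (y - x)"
      using t by simp
    then show ?thesis
      by (simp add: algebra_simps)
  qed
  then have "0 \<le> fy - fx - inner v (y - x) - \<mu> / 2 * (norm (y - x))\<^sup>2"
    by (rule nonneg_if_perturbations_nonneg)
  then show ?thesis
    using real by simp
qed

lemma strongly_convex_fun_0: "convex_fun f \<Longrightarrow> strongly_convex_fun 0 f"
  by (simp add: strongly_convex_fun_def zero_ereal_def[symmetric])

lemma strongly_convex_subdiff_monotone:
  assumes sc: "strongly_convex_fun \<mu> f" and v1: "v1 \<in> subdiff f x1" and v2: "v2 \<in> subdiff f x2"
  shows "\<mu> * (norm (x1 - x2))\<^sup>2 \<le> inner (v1 - v2) (x1 - x2)"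
proof -
  obtain f1 where f1: "f x1 = ereal f1" using v1 by (rule subdiffE)
  obtain f2 where f2: "f x2 = ereal f2" using v2 by (rule subdiffE)
  have "f1 + inner v1 (x2 - x1) + \<mu> / 2 * (norm (x2 - x1))\<^sup>2 \<le> f2"
    using strongly_convex_subdiff_ineq[OF sc v1 f1, of x2] f2 by simp
  moreover have "f2 + inner v2 (x1 - x2) + \<mu> / 2 * (norm (x1 - x2))\<^sup>2 \<le> f1"
    using strongly_convex_subdiff_ineq[OF sc v2 f2, of x1] f1 by simp
  ultimately show ?thesis
    by (simp add: norm_minus_commute inner_diff_left inner_diff_right algebra_simps)
qed

lemma strongly_convex_sum_minimizer_unique:
  assumes sc: "strongly_convex_fun \<mu> f1" and \<mu>: "\<mu> > 0"
    and v1: "v \<in> subdiff f1 x" and v2: "- v \<in> subdiff f2 x"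
    and min: "f1 y + f2 y \<le> f1 x + f2 x"
  shows "y = x"
proof -
  obtain a1 where a1: "f1 x = ereal a1" using v1 by (rule subdiffE)
  obtain a2 where a2: "f2 x = ereal a2" and le2: "ereal (a2 + inner (- v) (y - x)) \<le> f2 y"
    using v2 by (rule subdiffE) (metis a1 ereal.inject)
  have "ereal (a1 + inner v (y - x) + \<mu> / 2 * (norm (y - x))\<^sup>2) + ereal (a2 + inner (- v) (y - x))
      \<le> f1 y + f2 y"
    by (intro add_mono strongly_convex_subdiff_ineq[OF sc v1 a1] le2)
  also have "\<dots> \<le> ereal (a1 + a2)"
    using min by (simp add: a1 a2)
  finally have "\<mu> * (norm (y - x))\<^sup>2 \<le> 0"
    by simp
  with \<mu> show ?thesis
    by (simp add: mult_le_0_iff)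
qed

section \<open>The proximity operator\<close>

lemma Inter_nonempty_if_compact_mono:
  fixes L :: "real \<Rightarrow> 'a::t2_space set"
  assumes compact: "\<And>c. compact (L c)" and mono: "\<And>c c'. c \<le> c' \<Longrightarrow> L c \<subseteq> L c'"
    and ne: "L c0 \<noteq> {}"
  shows "(\<Inter>c\<in>{c. L c \<noteq> {}}. L c) \<noteq> {}"
proof -
  have "L c0 \<inter> (\<Inter>c\<in>{c. L c \<noteq> {}}. L c) \<noteq> {}"
  proof (rule compact_imp_fip_image[OF compact])
    show "closed (L c)" for c
      using compact[of c] by (rule compact_imp_closed)
  next
    fix I assume fin: "finite I" and I: "I \<subseteq> {c. L c \<noteq> {}}"
    show "L c0 \<inter> (\<Inter>c\<in>I. L c) \<noteq> {}"
    proof (cases "I = {}")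
      case True
      with ne show ?thesis by auto
    next
      case False
      define c' where "c' = min (Min I) c0"
      have "L c' \<noteq> {}"
        using Min_in[OF fin False] I ne by (cases "Min I \<le> c0") (auto simp: c'_def)
      moreover have "L c' \<subseteq> L c0"
        by (rule mono) (simp add: c'_def)
      moreover have "L c' \<subseteq> L c" if "c \<in> I" for c
        using Min_le[OF fin that] by (intro mono) (simp add: c'_def min.coboundedI1)
      ultimately show ?thesis by blast
    qed
  qed
  then show ?thesis by blast
qed

lemma ereal_minimum_if_compact_sublevels:
  fixes F :: "'a::t2_space \<Rightarrow> ereal"
  assumes compact: "\<And>c. compact {y. F y \<le> ereal c}" and fin: "F y0 < \<infinity>"
  shows "\<exists>p. \<forall>y. F p \<le> F y"
proof -
  define L where "L c = {y. F y \<le> ereal c}" for c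
  have "y0 \<in> L (real_of_ereal (F y0))"
    using fin by (cases "F y0") (auto simp: L_def)
  then have "(\<Inter>c\<in>{c. L c \<noteq> {}}. L c) \<noteq> {}"
    using compact by (intro Inter_nonempty_if_compact_mono) (auto simp: L_def intro: order_trans)
  then obtain p where p: "F p \<le> ereal c" if "y \<in> L c" for y c
    unfolding L_def by blast
  have "F p \<le> F y" for y
  proof (cases "F y")
    case (real r)
    then show ?thesis using p[of y r] by (simp add: L_def)
  next
    case MInf
    then have "F p = -\<infinity>"
      using p[of y] by (intro ereal_bot) (simp add: L_def)
    then show ?thesis by simp
  qed simp
  then show ?thesis by blast
qed

lemma le_if_quadratic_le:
  fixes n A B :: real
  assumes "0 \<le> n" "0 \<le> A" "n\<^sup>2 \<le> A * n + B"
  shows "n \<le> A + \<bar>B\<bar> + 1"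
proof (rule ccontr)
  assume "\<not> ?thesis"
  then have n: "A + \<bar>B\<bar> + 1 < n" by simp
  then have "A * n + B < A * n + (\<bar>B\<bar> + 1) * n"
    using assms by (simp add: add_strict_left_mono less_le_trans[OF _ mult_left_mono[of 1 n]])
  also have "\<dots> < n * n"
    using n assms by (simp add: distrib_right[symmetric] mult_strict_right_mono)
  finally show False
    using assms by (simp add: power2_eq_square)
qed

text \<open>A proper closed convex function always has an affine minorant; requiring it explicitly
  avoids a separation argument, since here it comes from a point where the conjugate is finite.\<close>
definition prox_admissible :: "('a::euclidean_space \<Rightarrow> ereal) \<Rightarrow> bool" where
  "prox_admissible \<phi> \<longleftrightarrow> convex_fun \<phi> \<and> closed_fun \<phi> \<and> (\<exists>y. \<phi> y < \<infinity>)
     \<and> (\<exists>a b. \<forall>y. ereal (inner a y + b) \<le> \<phi> y)"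

lemma closed_sublevel_prox_objective:
  fixes \<phi> :: "'a::euclidean_space \<Rightarrow> ereal"
  assumes closed: "closed_fun \<phi>" and not_MInf: "\<And>y. \<phi> y \<noteq> -\<infinity>" and \<gamma>: "\<gamma> > 0"
  shows "closed {y. ereal \<gamma> * \<phi> y + ereal ((norm (y - z))\<^sup>2 / 2) \<le> ereal c}"
proof -
  have "ereal \<gamma> * \<phi> y + ereal ((norm (y - z))\<^sup>2 / 2) \<le> ereal c
      \<longleftrightarrow> \<phi> y \<le> ereal ((c - (norm (y - z))\<^sup>2 / 2) / \<gamma>)" for y
    using not_MInf[of y] \<gamma> by (cases "\<phi> y") (auto simp: pos_le_divide_eq algebra_simps)
  then have "{y. ereal \<gamma> * \<phi> y + ereal ((norm (y - z))\<^sup>2 / 2) \<le> ereal c}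
      = (\<lambda>y. (y, (c - (norm (y - z))\<^sup>2 / 2) / \<gamma>)) -` {(x, r). \<phi> x \<le> ereal r}"
    by auto
  moreover have "closed {(x, r). \<phi> x \<le> ereal r}"
    using closed by (simp add: closed_fun_def)
  ultimately show ?thesis
    using \<gamma> by (simp only:) (rule continuous_closed_vimage, auto intro!: continuous_intros)
qed

lemma bounded_sublevel_prox_objective:
  fixes \<phi> :: "'a::euclidean_space \<Rightarrow> ereal"
  assumes ab: "\<And>y. ereal (inner a y + b) \<le> \<phi> y" and \<gamma>: "\<gamma> > 0"
  shows "bounded {y. ereal \<gamma> * \<phi> y + ereal ((norm (y - z))\<^sup>2 / 2) \<le> ereal c}"
proof -
  define \<rho> where "\<rho> = 2 * \<gamma> * norm a + \<bar>2 * (c - \<gamma> * b - \<gamma> * inner a z)\<bar> + 1"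
  have "{y. ereal \<gamma> * \<phi> y + ereal ((norm (y - z))\<^sup>2 / 2) \<le> ereal c} \<subseteq> cball z \<rho>"
  proof safe
    fix y assume "ereal \<gamma> * \<phi> y + ereal ((norm (y - z))\<^sup>2 / 2) \<le> ereal c"
    then obtain r where r: "\<phi> y = ereal r" "\<gamma> * r + (norm (y - z))\<^sup>2 / 2 \<le> c"
      using \<gamma> ab[of y] by (cases "\<phi> y") auto
    have "- (norm a * norm (y - z)) \<le> inner a (y - z)"
      using Cauchy_Schwarz_ineq2[of a "y - z"] by linarith
    then have "\<gamma> * (b + inner a z - norm a * norm (y - z)) \<le> \<gamma> * (inner a y + b)"
      using \<gamma> by (intro mult_left_mono) (auto simp: inner_diff_right)
    also have "\<dots> \<le> \<gamma> * r"
      using ab[of y] r(1) \<gamma> by simp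
    finally have "(norm (y - z))\<^sup>2 \<le> (2 * \<gamma> * norm a) * norm (y - z) + 2 * (c - \<gamma> * b - \<gamma> * inner a z)"
      using r(2) by (simp add: algebra_simps)
    then show "y \<in> cball z \<rho>"
      unfolding \<rho>_def using \<gamma> le_if_quadratic_le by (simp add: dist_norm norm_minus_commute)
  qed
  then show ?thesis
    by (rule bounded_subset[OF bounded_cball])
qed

lemma compact_sublevel_prox_objective:
  fixes \<phi> :: "'a::euclidean_space \<Rightarrow> ereal"
  assumes adm: "prox_admissible \<phi>" and \<gamma>: "\<gamma> > 0"
  shows "compact {y. ereal \<gamma> * \<phi> y + ereal ((norm (y - z))\<^sup>2 / 2) \<le> ereal c}"
proof -
  obtain a b where ab: "\<And>y. ereal (inner a y + b) \<le> \<phi> y"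
    using adm by (auto simp: prox_admissible_def)
  then have "\<phi> y \<noteq> -\<infinity>" for y
    by (metis MInfty_neq_ereal(1) ereal_infty_less_eq(2))
  with ab adm \<gamma> show ?thesis
    unfolding compact_eq_bounded_closed prox_admissible_def
    by (blast intro: closed_sublevel_prox_objective bounded_sublevel_prox_objective)
qed

lemma prox_minimizes:
  fixes \<phi> :: "'a::euclidean_space \<Rightarrow> ereal"
  assumes adm: "prox_admissible \<phi>" and \<gamma>: "\<gamma> > 0"
  shows "ereal \<gamma> * \<phi> (prox \<gamma> \<phi> z) + ereal ((norm (prox \<gamma> \<phi> z - z))\<^sup>2 / 2)
           \<le> ereal \<gamma> * \<phi> y + ereal ((norm (y - z))\<^sup>2 / 2)"
proof -
  obtain y0 where "\<phi> y0 < \<infinity>"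
    using adm by (auto simp: prox_admissible_def)
  then have "ereal \<gamma> * \<phi> y0 + ereal ((norm (y0 - z))\<^sup>2 / 2) < \<infinity>"
    using \<gamma> by (cases "\<phi> y0") auto
  then have "\<exists>p. \<forall>y. ereal \<gamma> * \<phi> p + ereal ((norm (p - z))\<^sup>2 / 2) \<le> ereal \<gamma> * \<phi> y + ereal ((norm (y - z))\<^sup>2 / 2)"
    by (intro ereal_minimum_if_compact_sublevels compact_sublevel_prox_objective[OF adm \<gamma>])
  then show ?thesis
    unfolding prox_def by (rule someI2_ex) blast
qed

lemma prox_variational_ineq:
  fixes \<phi> :: "'a::euclidean_space \<Rightarrow> ereal"
  assumes adm: "prox_admissible \<phi>" and \<gamma>: "\<gamma> > 0"
    and fp: "\<phi> (prox \<gamma> \<phi> z) = ereal fp" and fy: "\<phi> y = ereal fy"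
  shows "inner (z - prox \<gamma> \<phi> z) (y - prox \<gamma> \<phi> z) \<le> \<gamma> * (fy - fp)"
proof -
  define p where "p = prox \<gamma> \<phi> z"
  obtain a b where ab: "\<And>y. ereal (inner a y + b) \<le> \<phi> y"
    using adm unfolding prox_admissible_def by blast
  have "0 \<le> (\<gamma> * (fy - fp) + inner (p - z) (y - p)) + t * ((norm (y - p))\<^sup>2 / 2)"
    if t: "0 < t" "t < 1" for t
  proof -
    define yt where "yt = p + t *\<^sub>R (y - p)"
    have "yt = (1 - t) *\<^sub>R p + t *\<^sub>R y"
      by (simp add: yt_def algebra_simps)
    then have "\<phi> yt \<le> ereal (1 - t) * \<phi> p + ereal t * \<phi> y"
      using adm t unfolding prox_admissible_def convex_fun_def by auto
    then have "\<phi> yt \<le> ereal ((1 - t) * fp + t * fy)"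
      by (simp add: fp[folded p_def] fy)
    then obtain ft where ft: "\<phi> yt = ereal ft" "ft \<le> (1 - t) * fp + t * fy"
      using ab[of yt] by (cases "\<phi> yt") auto
    have yt_z: "yt - z = (p - z) + t *\<^sub>R (y - p)"
      by (simp add: yt_def)
    have "\<gamma> * fp + (norm (p - z))\<^sup>2 / 2 \<le> \<gamma> * ft + (norm (yt - z))\<^sup>2 / 2"
      using prox_minimizes[OF adm \<gamma>, of z yt] by (simp add: ft fp p_def)
    moreover have "\<gamma> * ft \<le> \<gamma> * ((1 - t) * fp + t * fy)"
      using ft(2) \<gamma> by simp
    moreover have "(norm (yt - z))\<^sup>2 = (norm (p - z))\<^sup>2 + 2 * t * inner (p - z) (y - p) + t\<^sup>2 * (norm (y - p))\<^sup>2"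
      unfolding yt_z power2_norm_eq_inner
      by (simp add: inner_add_left inner_add_right inner_commute power2_eq_square algebra_simps)
    ultimately have "0 \<le> t * (\<gamma> * (fy - fp) + inner (p - z) (y - p) + t * ((norm (y - p))\<^sup>2 / 2))"
      by (simp add: algebra_simps power2_eq_square)
    then show ?thesis
      using t by (simp add: zero_le_mult_iff)
  qed
  then have "0 \<le> \<gamma> * (fy - fp) + inner (p - z) (y - p)"
    by (rule nonneg_if_perturbations_nonneg)
  then show ?thesis
    by (simp add: p_def inner_diff_left)
qed

lemma subdiff_prox:
  fixes \<phi> :: "'a::euclidean_space \<Rightarrow> ereal"
  assumes adm: "prox_admissible \<phi>" and \<gamma>: "\<gamma> > 0"
  shows "(1 / \<gamma>) *\<^sub>R (z - prox \<gamma> \<phi> z) \<in> subdiff \<phi> (prox \<gamma> \<phi> z)"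
proof -
  define p where "p = prox \<gamma> \<phi> z"
  obtain a b y0 where ab: "\<And>y. ereal (inner a y + b) \<le> \<phi> y" and y0: "\<phi> y0 < \<infinity>"
    using adm unfolding prox_admissible_def by blast
  have not_MInf: "\<phi> y \<noteq> -\<infinity>" for y
    using ab[of y] by auto
  have "ereal \<gamma> * \<phi> p + ereal ((norm (p - z))\<^sup>2 / 2) \<le> ereal \<gamma> * \<phi> y0 + ereal ((norm (y0 - z))\<^sup>2 / 2)"
    unfolding p_def by (rule prox_minimizes[OF adm \<gamma>])
  then obtain fp where fp: "\<phi> p = ereal fp"
    using y0 not_MInf[of p] not_MInf[of y0] \<gamma> by (cases "\<phi> p"; cases "\<phi> y0") auto
  have "ereal (fp + inner ((1 / \<gamma>) *\<^sub>R (z - p)) (y - p)) \<le> \<phi> y" for y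
  proof (cases "\<phi> y")
    case (real fy)
    then have "(1 / \<gamma>) * inner (z - p) (y - p) \<le> fy - fp"
      using prox_variational_ineq[OF adm \<gamma> fp[unfolded p_def] real] \<gamma>
      by (simp add: p_def field_simps)
    then show ?thesis
      using real by simp
  qed (use not_MInf in auto)
  then show ?thesis
    unfolding p_def[symmetric] by (rule subdiffI[of \<phi> p fp, OF fp])
qed

lemma subdiff_resolvent_firmly_nonexpansive:
  assumes cv: "convex_fun \<phi>" and \<gamma>: "\<gamma> > 0"
    and p1: "(1 / \<gamma>) *\<^sub>R (z1 - p1) \<in> subdiff \<phi> p1"
    and p2: "(1 / \<gamma>) *\<^sub>R (z2 - p2) \<in> subdiff \<phi> p2"
  shows "(norm (p1 - p2))\<^sup>2 \<le> inner (z1 - z2) (p1 - p2)"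
proof -
  have "0 \<le> inner ((1 / \<gamma>) *\<^sub>R (z1 - p1) - (1 / \<gamma>) *\<^sub>R (z2 - p2)) (p1 - p2)"
    using strongly_convex_subdiff_monotone[OF strongly_convex_fun_0[OF cv] p1 p2] by simp
  also have "\<dots> = (1 / \<gamma>) * inner ((z1 - z2) - (p1 - p2)) (p1 - p2)"
    by (simp add: scaleR_diff_right algebra_simps)
  finally show ?thesis
    using \<gamma> by (simp add: zero_le_divide_iff inner_diff_left power2_norm_eq_inner)
qed

lemma prox_eqI:
  fixes \<phi> :: "'a::euclidean_space \<Rightarrow> ereal"
  assumes adm: "prox_admissible \<phi>" and \<gamma>: "\<gamma> > 0"
    and p: "(1 / \<gamma>) *\<^sub>R (z - p) \<in> subdiff \<phi> p"
  shows "prox \<gamma> \<phi> z = p"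
proof -
  have "convex_fun \<phi>"
    using adm by (simp add: prox_admissible_def)
  from subdiff_resolvent_firmly_nonexpansive[OF this \<gamma> subdiff_prox[OF adm \<gamma>, of z] p]
  show ?thesis by simp
qed

lemma prox_nonexpansive:
  fixes \<phi> :: "'a::euclidean_space \<Rightarrow> ereal"
  assumes adm: "prox_admissible \<phi>" and \<gamma>: "\<gamma> > 0"
  shows "norm (prox \<gamma> \<phi> z1 - prox \<gamma> \<phi> z2) \<le> norm (z1 - z2)"
proof -
  define q where "q = prox \<gamma> \<phi> z1 - prox \<gamma> \<phi> z2"
  have "convex_fun \<phi>"
    using adm by (simp add: prox_admissible_def)
  then have "(norm q)\<^sup>2 \<le> inner (z1 - z2) q"
    unfolding q_def by (rule subdiff_resolvent_firmly_nonexpansive[OF _ \<gamma> subdiff_prox[OF adm \<gamma>] subdiff_prox[OF adm \<gamma>]])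
  also have "\<dots> \<le> norm (z1 - z2) * norm q"
    by (rule norm_cauchy_schwarz)
  finally show ?thesis
    unfolding q_def[symmetric] by (cases "q = 0") (auto simp: power2_eq_square)
qed

lemma continuous_on_prox:
  fixes \<phi> :: "'a::euclidean_space \<Rightarrow> ereal"
  assumes "prox_admissible \<phi>" and "\<gamma> > 0"
  shows "continuous_on UNIV (prox \<gamma> \<phi>)"
  by (rule lipschitz_on_continuous_on[of 1], rule lipschitz_onI)
    (simp_all add: dist_norm prox_nonexpansive[OF assms])

section \<open>Primal and dual solutions\<close>

lemma prox_admissible_if_subdiff:
  assumes "convex_fun f" "closed_fun f" and v: "v \<in> subdiff f x"
  shows "prox_admissible f"
proof -
  obtain fx where fx: "f x = ereal fx" and le: "\<And>y. ereal (fx + inner v (y - x)) \<le> f y"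
    using subdiffE[OF v] by blast
  have "ereal (inner v y + (fx - inner v x)) \<le> f y" for y
    using le[of y] by (simp add: inner_diff_right algebra_simps)
  moreover have "f x < \<infinity>"
    using fx by simp
  ultimately show ?thesis
    using assms(1,2) unfolding prox_admissible_def by blast
qed

lemma prox_admissible_if_subdiff_conj:
  assumes h: "proper_fun h" "closed_fun h" "convex_fun h" and x: "x \<in> subdiff (conj_fun h) u"
  shows "prox_admissible h"
proof -
  obtain ch where ch: "conj_fun h u = ereal ch"
    using x by (rule subdiffE)
  have "ereal (inner u y + - ch) \<le> h y" for y
  proof -
    have "ereal (inner u y) - h y \<le> ereal ch"
      unfolding ch[symmetric] conj_fun_def by (rule SUP_upper) simp
    then show ?thesis
      using h(1) by (cases "h y") (auto simp: proper_fun_def)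
  qed
  with h show ?thesis
    unfolding prox_admissible_def proper_fun_def by blast
qed

text \<open>The converse of \<open>subdiff_conj_fun\<close>, without the biconjugate theorem: for
  \<open>p = prox 1 h (x + u)\<close> we have \<open>p \<in> subdiff (conj_fun h) (x + u - p)\<close>, and
  monotonicity of the subdifferential of the conjugate forces \<open>p = x\<close>.\<close>
lemma subdiff_if_subdiff_conj:
  assumes adm: "prox_admissible h" and sc: "strongly_convex_fun \<mu> (conj_fun h)" and \<mu>: "0 \<le> \<mu>"
    and x: "x \<in> subdiff (conj_fun h) u"
  shows "u \<in> subdiff h x"
proof -
  define p where "p = prox 1 h (x + u)"
  have p: "x + u - p \<in> subdiff h p"
    using subdiff_prox[OF adm, of 1 "x + u"] by (simp add: p_def)
  have "\<mu> * (norm ((x + u - p) - u))\<^sup>2 \<le> inner (p - x) ((x + u - p) - u)"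
    by (rule strongly_convex_subdiff_monotone[OF sc subdiff_conj_fun[OF p] x])
  also have "\<dots> = - (norm (x - p))\<^sup>2"
    by (simp add: power2_norm_eq_inner inner_diff_left inner_diff_right inner_commute)
  finally have "(\<mu> + 1) * (norm (x - p))\<^sup>2 \<le> 0"
    by (simp add: algebra_simps)
  then have "x = p"
    using \<mu> by (simp add: mult_le_0_iff add_pos_nonneg)
  with p show ?thesis
    by simp
qed

lemma kkt_at_solutions:
  fixes g h :: "'a::euclidean_space \<Rightarrow> ereal"
  assumes g: "closed_fun g" "convex_fun g"
    and h: "proper_fun h" "closed_fun h" "convex_fun h"
    and sc_g: "strongly_convex_fun \<mu>g g" and sc_hs: "strongly_convex_fun \<mu>hs (conj_fun h)"
    and \<mu>g: "\<mu>g > 0" and \<mu>hs: "\<mu>hs > 0"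
    and kkt: "\<exists>x u. - u \<in> subdiff g x \<and> x \<in> subdiff (conj_fun h) u"
    and primal_sol: "\<forall>x. g xs + h xs \<le> g x + h x"
    and dual_sol: "\<forall>u. conj_fun g (- us) + conj_fun h us \<le> conj_fun g (- u) + conj_fun h u"
  shows "prox_admissible g" "prox_admissible h" "- us \<in> subdiff g xs" "xs \<in> subdiff (conj_fun h) us"
proof -
  obtain x u where gx: "- u \<in> subdiff g x" and hu: "x \<in> subdiff (conj_fun h) u"
    using kkt by blast
  show adm_g: "prox_admissible g"
    using g gx by (intro prox_admissible_if_subdiff)
  show adm_h: "prox_admissible h"
    using h hu by (intro prox_admissible_if_subdiff_conj)
  have "- (- u) \<in> subdiff h x"
    using subdiff_if_subdiff_conj[OF adm_h sc_hs _ hu] \<mu>hs by simp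
  with primal_sol have "xs = x"
    by (intro strongly_convex_sum_minimizer_unique[OF sc_g \<mu>g gx]) auto
  have "- x \<in> subdiff (\<lambda>v. conj_fun g (- v)) u"
    using subdiff_reflect[of x "conj_fun g" u] subdiff_conj_fun[OF gx] by simp
  with dual_sol have "us = u"
    by (intro strongly_convex_sum_minimizer_unique[OF sc_hs \<mu>hs hu]) (auto simp: add.commute)
  show "- us \<in> subdiff g xs" "xs \<in> subdiff (conj_fun h) us"
    using gx hu \<open>xs = x\<close> \<open>us = u\<close> by simp_all
qed

section \<open>One step of RandProx-ADMM\<close>

lemma rp_x_0 [simp]: "rp_x \<gamma> \<omega> g h R x0 u0 0 s = x0"
  and rp_u_0 [simp]: "rp_u \<gamma> \<omega> g h R x0 u0 0 s = u0"
  by (simp_all add: rp_x_def rp_u_def)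

lemma rp_x_Suc:
  "rp_x \<gamma> \<omega> g h R x0 u0 (Suc t) s =
     rp_xhat \<gamma> g (rp_x \<gamma> \<omega> g h R x0 u0 t s) (rp_u \<gamma> \<omega> g h R x0 u0 t s)
     - (1 / (1 + \<omega>)) *\<^sub>R R t s (rp_res \<gamma> \<omega> g h (rp_x \<gamma> \<omega> g h R x0 u0 t s) (rp_u \<gamma> \<omega> g h R x0 u0 t s))"
  and rp_u_Suc:
  "rp_u \<gamma> \<omega> g h R x0 u0 (Suc t) s =
     rp_u \<gamma> \<omega> g h R x0 u0 t s
     + (1 / (\<gamma> * (1 + \<omega>)\<^sup>2)) *\<^sub>R R t s (rp_res \<gamma> \<omega> g h (rp_x \<gamma> \<omega> g h R x0 u0 t s) (rp_u \<gamma> \<omega> g h R x0 u0 t s))"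
  by (simp_all add: rp_x_def rp_u_def Let_def split: prod.split)

lemma continuous_on_rp_xhat:
  assumes "prox_admissible g" "\<gamma> > 0"
  shows "continuous_on UNIV (\<lambda>(x, u). rp_xhat \<gamma> g x u)"
  unfolding rp_xhat_def case_prod_beta
  by (rule continuous_on_compose2[OF continuous_on_prox[OF assms]]) (auto intro!: continuous_intros)

lemma continuous_on_rp_res:
  assumes g: "prox_admissible g" and h: "prox_admissible h" and "\<gamma> > 0" "\<omega> \<ge> 0"
  shows "continuous_on UNIV (\<lambda>(x, u). rp_res \<gamma> \<omega> g h x u)"
proof -
  have "\<gamma> * (1 + \<omega>) > 0"
    using assms by simp
  note prox_h = continuous_on_prox[OF h this]
  have xh: "continuous_on UNIV (\<lambda>p. rp_xhat \<gamma> g (fst p) (snd p))"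
    using continuous_on_rp_xhat[OF g \<open>\<gamma> > 0\<close>] by (simp add: case_prod_beta)
  have "continuous_on UNIV (\<lambda>p. prox (\<gamma> * (1 + \<omega>)) h (rp_xhat \<gamma> g (fst p) (snd p) + (\<gamma> * (1 + \<omega>)) *\<^sub>R snd p))"
    by (rule continuous_on_compose2[OF prox_h]) (auto intro!: continuous_intros xh)
  then show ?thesis
    unfolding rp_res_def case_prod_beta by (intro continuous_intros xh)
qed

lemma rp_xhat_fixed_point:
  assumes "prox_admissible g" "\<gamma> > 0" "- us \<in> subdiff g xs"
  shows "rp_xhat \<gamma> g xs us = xs"
  unfolding rp_xhat_def using assms by (intro prox_eqI) simp_all

lemma weighted_norms_shift:
  fixes A B \<delta> :: "'a::real_inner"
  shows "\<alpha> * (norm (A - a *\<^sub>R \<delta>))\<^sup>2 + \<beta> * (norm (B + b *\<^sub>R \<delta>))\<^sup>2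
       = (\<alpha> * (norm A)\<^sup>2 + \<beta> * (norm B)\<^sup>2) + inner ((- (2 * \<alpha> * a)) *\<^sub>R A + (2 * \<beta> * b) *\<^sub>R B) \<delta>
         + (\<alpha> * a\<^sup>2 + \<beta> * b\<^sup>2) * (norm \<delta>)\<^sup>2"
  unfolding power2_norm_eq_inner
  by (simp add: inner_diff_left inner_diff_right inner_add_left inner_add_right inner_commute
      power2_eq_square algebra_simps)

lemma norm_sq_combination_le:
  fixes A B :: "'a::real_inner"
  assumes cA: "cA > 0" and cB: "cB > 0"
  shows "(norm (\<alpha> *\<^sub>R A + \<beta> *\<^sub>R B))\<^sup>2
         \<le> (2 * \<alpha>\<^sup>2 / cA + 2 * \<beta>\<^sup>2 / cB) * (cA * (norm A)\<^sup>2 + cB * (norm B)\<^sup>2)"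
proof -
  have "(norm (\<alpha> *\<^sub>R A + \<beta> *\<^sub>R B))\<^sup>2 \<le> (norm (\<alpha> *\<^sub>R A) + norm (\<beta> *\<^sub>R B))\<^sup>2"
    using norm_triangle_ineq[of "\<alpha> *\<^sub>R A" "\<beta> *\<^sub>R B"] by (intro power_mono) auto
  also have "\<dots> \<le> 2 * \<alpha>\<^sup>2 * (norm A)\<^sup>2 + 2 * \<beta>\<^sup>2 * (norm B)\<^sup>2"
    using sum_squares_bound[of "norm (\<alpha> *\<^sub>R A)" "norm (\<beta> *\<^sub>R B)"]
    by (simp add: power2_sum power_mult_distrib)
  also have "\<dots> \<le> (2 * \<alpha>\<^sup>2 / cA + 2 * \<beta>\<^sup>2 / cB) * (cA * (norm A)\<^sup>2 + cB * (norm B)\<^sup>2)"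
    using cA cB by (simp add: field_simps)
  finally show ?thesis .
qed

lemma resolvent_step_bound:
  fixes X a e :: "'a::real_inner"
  assumes \<gamma>: "\<gamma> > 0" and \<mu>: "\<mu> \<ge> 0"
    and mono: "\<gamma> * \<mu> * (norm a)\<^sup>2 \<le> inner (X - a) a - \<gamma> * inner e a"
  shows "(norm a)\<^sup>2 / \<gamma> + 2 * inner a e \<le> (1 / (1 + \<gamma> * \<mu>)) * ((1 / \<gamma>) * (norm X)\<^sup>2)"
proof -
  define k where "k = 1 + 2 * \<gamma> * \<mu>"
  have k: "1 + \<gamma> * \<mu> \<le> k" "0 < 1 + \<gamma> * \<mu>"
    using \<gamma> \<mu> by (auto simp: k_def add_pos_nonneg)
  have "0 \<le> (norm (X - k *\<^sub>R a))\<^sup>2"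
    by simp
  then have "k * (2 * inner X a - k * (norm a)\<^sup>2) \<le> (norm X)\<^sup>2"
    unfolding power2_norm_eq_inner
    by (simp add: inner_diff_left inner_diff_right inner_commute power2_eq_square algebra_simps)
  then have "2 * inner X a - k * (norm a)\<^sup>2 \<le> (norm X)\<^sup>2 / k"
    using k by (simp add: field_simps)
  also have "\<dots> \<le> (norm X)\<^sup>2 / (1 + \<gamma> * \<mu>)"
    using k by (intro divide_left_mono) auto
  finally have bound: "(norm a)\<^sup>2 + \<gamma> * (2 * inner a e) \<le> (norm X)\<^sup>2 / (1 + \<gamma> * \<mu>)"
    using mono by (simp add: k_def power2_norm_eq_inner inner_diff_left inner_commute algebra_simps)
  have "(norm a)\<^sup>2 / \<gamma> + 2 * inner a e = ((norm a)\<^sup>2 + \<gamma> * (2 * inner a e)) / \<gamma>"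
    using \<gamma> by (simp add: field_simps)
  also have "\<dots> \<le> ((norm X)\<^sup>2 / (1 + \<gamma> * \<mu>)) / \<gamma>"
    using bound \<gamma> by (intro divide_right_mono) auto
  finally show ?thesis
    by simp
qed

lemma rp_step_identity:
  fixes a b e :: "'a::real_inner" and \<gamma> \<omega> \<mu> :: real
  assumes \<gamma>: "\<gamma> > 0" and \<omega>: "\<omega> \<ge> 0"
  defines "r \<equiv> (\<gamma> * (1 + \<omega>)) *\<^sub>R (b - e)"
    and "C \<equiv> (1 + \<omega>) * (\<gamma> * (1 + \<omega>) + 2 * \<mu>)"
  shows "(1 / \<gamma>) * (norm (a - (1 / (1 + \<omega>)) *\<^sub>R r))\<^sup>2
         + C * (norm (e + (1 / (\<gamma> * (1 + \<omega>)\<^sup>2)) *\<^sub>R r))\<^sup>2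
         + \<omega> * ((1 / \<gamma>) * (1 / (1 + \<omega>))\<^sup>2 + C * (1 / (\<gamma> * (1 + \<omega>)\<^sup>2))\<^sup>2) * (norm r)\<^sup>2
       = (norm a)\<^sup>2 / \<gamma> + 2 * inner a e + (\<gamma> * (1 + \<omega>) + \<omega> * (\<gamma> * (1 + \<omega>) + 2 * \<mu>)) * (norm e)\<^sup>2
         - 2 * (inner (a - r) b - \<mu> * (norm b)\<^sup>2)"
proof -
  define w where "w = 1 + \<omega>"
  have w: "w > 0"
    using \<omega> by (simp add: w_def)
  have r1: "(1 / w) *\<^sub>R r = \<gamma> *\<^sub>R (b - e)"
    using w by (simp add: r_def w_def[symmetric])
  have r2: "(1 / (\<gamma> * w\<^sup>2)) *\<^sub>R r = (1 / w) *\<^sub>R (b - e)"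
    using w \<gamma> by (simp add: r_def w_def[symmetric] power2_eq_square)
  have r3: "(norm r)\<^sup>2 = (\<gamma> * w)\<^sup>2 * (norm (b - e))\<^sup>2"
    using w \<gamma> by (simp add: r_def w_def[symmetric] power_mult_distrib)
  define aa ab ae bb be ee where "aa = inner a a" and "ab = inner a b" and "ae = inner a e"
    and "bb = inner b b" and "be = inner b e" and "ee = inner e e"
  have n: "(norm (b - e))\<^sup>2 = bb - 2 * be + ee"
    "(norm (a - \<gamma> *\<^sub>R (b - e)))\<^sup>2 = aa - 2 * \<gamma> * (ab - ae) + \<gamma>\<^sup>2 * (bb - 2 * be + ee)"
    "(norm (e + (1 / w) *\<^sub>R (b - e)))\<^sup>2 = ee + 2 / w * (be - ee) + (1 / w)\<^sup>2 * (bb - 2 * be + ee)"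
    "inner (a - r) b = ab - \<gamma> * w * (bb - be)"
    "(norm a)\<^sup>2 = aa" "(norm e)\<^sup>2 = ee" "(norm b)\<^sup>2 = bb" "inner a e = ae"
    unfolding power2_norm_eq_inner r_def w_def[symmetric] aa_def ab_def ae_def bb_def be_def ee_def
    by (simp_all add: inner_diff_left inner_diff_right inner_add_left inner_add_right inner_commute
        power2_eq_square algebra_simps)
  have \<omega>_eq: "\<omega> = w - 1"
    by (simp add: w_def)
  show ?thesis
    unfolding C_def w_def[symmetric] unfolding r1 r2 r3 n \<omega>_eq
    using w \<gamma> by (simp add: field_simps power2_eq_square)
qed

definition rp_dual_weight :: "real \<Rightarrow> real \<Rightarrow> real \<Rightarrow> real" where
  "rp_dual_weight \<gamma> \<omega> \<mu> = (1 + \<omega>) * (\<gamma> * (1 + \<omega>) + 2 * \<mu>)"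

definition rp_lyapunov :: "real \<Rightarrow> real \<Rightarrow> real \<Rightarrow> 'a::real_normed_vector \<Rightarrow> 'a \<Rightarrow> 'a \<Rightarrow> 'a \<Rightarrow> real" where
  "rp_lyapunov \<gamma> \<omega> \<mu> xs us x u = (1 / \<gamma>) * (norm (x - xs))\<^sup>2 + rp_dual_weight \<gamma> \<omega> \<mu> * (norm (u - us))\<^sup>2"

text \<open>The coefficient of \<open>norm (d - r)\<^sup>2\<close> in \<open>rp_lyapunov\<close> at the next iterate, where \<open>d\<close> is
  the random estimate of the residual \<open>r\<close>.\<close>
definition rp_noise_weight :: "real \<Rightarrow> real \<Rightarrow> real \<Rightarrow> real" where
  "rp_noise_weight \<gamma> \<omega> \<mu> = (1 / \<gamma>) * (1 / (1 + \<omega>))\<^sup>2 + rp_dual_weight \<gamma> \<omega> \<mu> * (1 / (\<gamma> * (1 + \<omega>)\<^sup>2))\<^sup>2"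

definition rp_rate :: "real \<Rightarrow> real \<Rightarrow> real \<Rightarrow> real \<Rightarrow> real" where
  "rp_rate \<gamma> \<omega> \<mu>g \<mu>h = max (1 / (1 + \<gamma> * \<mu>g))
     (1 - 2 * (1 / (\<gamma> * (1 + \<omega>))) * \<mu>h / ((1 + \<omega>) * (1 + 2 * (1 / (\<gamma> * (1 + \<omega>))) * \<mu>h)))"

lemma rp_weights_pos:
  assumes "\<gamma> > 0" "\<omega> \<ge> 0" "\<mu> \<ge> 0"
  shows "rp_dual_weight \<gamma> \<omega> \<mu> > 0" "rp_noise_weight \<gamma> \<omega> \<mu> > 0"
  using assms by (auto simp: rp_dual_weight_def rp_noise_weight_def add_pos_nonneg)

lemma rp_lyapunov_nonneg:
  "\<gamma> > 0 \<Longrightarrow> \<omega> \<ge> 0 \<Longrightarrow> \<mu> \<ge> 0 \<Longrightarrow> 0 \<le> rp_lyapunov \<gamma> \<omega> \<mu> xs us x u"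
  by (simp add: rp_lyapunov_def rp_dual_weight_def)

lemma rp_rate_dual_factor:
  assumes "\<gamma> > 0" "\<omega> \<ge> 0" "\<mu> \<ge> 0"
  shows "(1 - 2 * (1 / (\<gamma> * (1 + \<omega>))) * \<mu> / ((1 + \<omega>) * (1 + 2 * (1 / (\<gamma> * (1 + \<omega>))) * \<mu>)))
           * rp_dual_weight \<gamma> \<omega> \<mu>
         = \<gamma> * (1 + \<omega>) + \<omega> * (\<gamma> * (1 + \<omega>) + 2 * \<mu>)"
proof -
  define \<tau> where "\<tau> = 1 / (\<gamma> * (1 + \<omega>))"
  define K where "K = (1 + \<omega>) * (1 + 2 * \<tau> * \<mu>)"
  have pos: "\<tau> > 0" "K > 0"
    using assms by (auto simp: \<tau>_def K_def add_pos_nonneg)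
  have "\<gamma> * (1 + \<omega>) \<noteq> 0"
    using assms by simp
  then have W: "rp_dual_weight \<gamma> \<omega> \<mu> = K / \<tau>"
    by (simp add: rp_dual_weight_def \<tau>_def K_def field_simps)
  have "2 * \<tau> * \<mu> / K * rp_dual_weight \<gamma> \<omega> \<mu> = 2 * \<mu>"
    unfolding W using pos by (simp add: field_simps)
  then show ?thesis
    unfolding \<tau>_def[symmetric] K_def[symmetric] by (simp add: left_diff_distrib rp_dual_weight_def algebra_simps)
qed

lemma rp_rate_eq:
  assumes "\<gamma> > 0" "\<mu>g \<ge> 0"
  shows "rp_rate \<gamma> \<omega> \<mu>g \<mu>h = 1 - min (\<gamma> * \<mu>g / (1 + \<gamma> * \<mu>g))
           (2 * (1 / (\<gamma> * (1 + \<omega>))) * \<mu>h / ((1 + \<omega>) * (1 + 2 * (1 / (\<gamma> * (1 + \<omega>))) * \<mu>h)))"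
proof -
  have "1 + \<gamma> * \<mu>g > 0"
    using assms by (simp add: add_pos_nonneg)
  then have "1 / (1 + \<gamma> * \<mu>g) = 1 - \<gamma> * \<mu>g / (1 + \<gamma> * \<mu>g)"
    by (simp add: field_simps)
  then show ?thesis
    unfolding rp_rate_def by (simp add: max_def min_def)
qed

lemma rp_rate_bounds:
  assumes "\<gamma> > 0" "\<omega> \<ge> 0" "\<mu>g > 0" "\<mu>h > 0"
  shows "0 \<le> rp_rate \<gamma> \<omega> \<mu>g \<mu>h" "rp_rate \<gamma> \<omega> \<mu>g \<mu>h < 1"
proof -
  show "0 \<le> rp_rate \<gamma> \<omega> \<mu>g \<mu>h"
    using assms unfolding rp_rate_def by (simp add: le_max_iff_disj add_pos_pos less_imp_le)
  have "0 < 2 * (1 / (\<gamma> * (1 + \<omega>))) * \<mu>h / ((1 + \<omega>) * (1 + 2 * (1 / (\<gamma> * (1 + \<omega>))) * \<mu>h))"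
    using assms by (simp add: add_pos_pos)
  moreover have "0 < \<gamma> * \<mu>g / (1 + \<gamma> * \<mu>g)"
    using assms by (simp add: add_pos_pos)
  ultimately show "rp_rate \<gamma> \<omega> \<mu>g \<mu>h < 1"
    using assms by (simp add: rp_rate_eq)
qed

text \<open>\<open>w\<close> is the subgradient of \<open>h\<close> that the second prox step produces at \<open>xh - r\<close>.\<close>
lemma rp_step_monotonicity:
  fixes g h :: "'a::euclidean_space \<Rightarrow> ereal" and x u :: 'a
  assumes adm_g: "prox_admissible g" and adm_h: "prox_admissible h"
    and sc_g: "strongly_convex_fun \<mu>g g" and sc_h: "strongly_convex_fun \<mu>h (conj_fun h)"
    and \<gamma>: "\<gamma> > 0" and \<omega>: "\<omega> \<ge> 0"
    and g_xs: "- us \<in> subdiff g xs" and h_us: "xs \<in> subdiff (conj_fun h) us"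
  defines "xh \<equiv> rp_xhat \<gamma> g x u" and "r \<equiv> rp_res \<gamma> \<omega> g h x u"
    and "w \<equiv> u + (1 / (\<gamma> * (1 + \<omega>))) *\<^sub>R rp_res \<gamma> \<omega> g h x u"
  shows "\<gamma> * \<mu>g * (norm (xh - xs))\<^sup>2 \<le> inner ((x - xs) - (xh - xs)) (xh - xs) - \<gamma> * inner (u - us) (xh - xs)"
    and "\<mu>h * (norm (w - us))\<^sup>2 \<le> inner ((xh - xs) - r) (w - us)"
proof -
  define \<gamma>' where "\<gamma>' = \<gamma> * (1 + \<omega>)"
  have \<gamma>': "\<gamma>' > 0"
    using \<gamma> \<omega> by (simp add: \<gamma>'_def)
  define p where "p = prox \<gamma>' h (xh + \<gamma>' *\<^sub>R u)"
  have r: "r = xh - p"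
    by (simp add: r_def rp_res_def xh_def p_def \<gamma>'_def)
  have "(1 / \<gamma>) *\<^sub>R ((x - \<gamma> *\<^sub>R u) - xh) \<in> subdiff g xh"
    unfolding xh_def rp_xhat_def by (rule subdiff_prox[OF adm_g \<gamma>])
  from strongly_convex_subdiff_monotone[OF sc_g this g_xs]
  have "\<mu>g * (norm (xh - xs))\<^sup>2 \<le> (1 / \<gamma>) * inner ((x - xs) - (xh - xs)) (xh - xs) - inner (u - us) (xh - xs)"
    using \<gamma> by (simp add: algebra_simps inner_diff_left)
  then have "\<gamma> * (\<mu>g * (norm (xh - xs))\<^sup>2)
      \<le> \<gamma> * ((1 / \<gamma>) * inner ((x - xs) - (xh - xs)) (xh - xs) - inner (u - us) (xh - xs))"
    using \<gamma> by simp
  then show "\<gamma> * \<mu>g * (norm (xh - xs))\<^sup>2 \<le> inner ((x - xs) - (xh - xs)) (xh - xs) - \<gamma> * inner (u - us) (xh - xs)"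
    using \<gamma> by (simp add: algebra_simps)
  have "(1 / \<gamma>') *\<^sub>R ((xh + \<gamma>' *\<^sub>R u) - p) = w"
    using \<gamma>' by (simp add: w_def[folded \<gamma>'_def] r[unfolded r_def] algebra_simps)
  then have "p \<in> subdiff (conj_fun h) w"
    using subdiff_conj_fun[OF subdiff_prox[OF adm_h \<gamma>']] by (metis p_def)
  from strongly_convex_subdiff_monotone[OF sc_h this h_us]
  show "\<mu>h * (norm (w - us))\<^sup>2 \<le> inner ((xh - xs) - r) (w - us)"
    by (simp add: r)
qed

lemma rp_lyapunov_contraction:
  fixes g h :: "'a::euclidean_space \<Rightarrow> ereal" and x u :: 'a
  assumes adm_g: "prox_admissible g" and adm_h: "prox_admissible h"
    and sc_g: "strongly_convex_fun \<mu>g g" and sc_h: "strongly_convex_fun \<mu>h (conj_fun h)"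
    and \<gamma>: "\<gamma> > 0" and \<omega>: "\<omega> \<ge> 0" and \<mu>g: "\<mu>g \<ge> 0" and \<mu>h: "\<mu>h \<ge> 0"
    and g_xs: "- us \<in> subdiff g xs" and h_us: "xs \<in> subdiff (conj_fun h) us"
  defines "r \<equiv> rp_res \<gamma> \<omega> g h x u"
  shows "rp_lyapunov \<gamma> \<omega> \<mu>h xs us (rp_xhat \<gamma> g x u - (1 / (1 + \<omega>)) *\<^sub>R r) (u + (1 / (\<gamma> * (1 + \<omega>)\<^sup>2)) *\<^sub>R r)
           + \<omega> * rp_noise_weight \<gamma> \<omega> \<mu>h * (norm r)\<^sup>2
         \<le> rp_rate \<gamma> \<omega> \<mu>g \<mu>h * rp_lyapunov \<gamma> \<omega> \<mu>h xs us x u"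
proof -
  define a b e where "a = rp_xhat \<gamma> g x u - xs" and "b = u + (1 / (\<gamma> * (1 + \<omega>))) *\<^sub>R r - us"
    and "e = u - us"
  note mono = rp_step_monotonicity[OF adm_g adm_h sc_g sc_h \<gamma> \<omega> g_xs h_us, where x=x and u=u, folded r_def, folded a_def b_def e_def]
  have r_be: "r = (\<gamma> * (1 + \<omega>)) *\<^sub>R (b - e)"
    using \<gamma> \<omega> by (simp add: b_def e_def)
  have "rp_lyapunov \<gamma> \<omega> \<mu>h xs us (rp_xhat \<gamma> g x u - (1 / (1 + \<omega>)) *\<^sub>R r) (u + (1 / (\<gamma> * (1 + \<omega>)\<^sup>2)) *\<^sub>R r)
        + \<omega> * rp_noise_weight \<gamma> \<omega> \<mu>h * (norm r)\<^sup>2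
      = (norm a)\<^sup>2 / \<gamma> + 2 * inner a e + (\<gamma> * (1 + \<omega>) + \<omega> * (\<gamma> * (1 + \<omega>) + 2 * \<mu>h)) * (norm e)\<^sup>2
        - 2 * (inner (a - r) b - \<mu>h * (norm b)\<^sup>2)"
    using rp_step_identity[OF \<gamma> \<omega>, of a b e \<mu>h] unfolding r_be
    by (simp add: rp_lyapunov_def rp_noise_weight_def rp_dual_weight_def a_def e_def algebra_simps)
  also have "\<dots> \<le> (norm a)\<^sup>2 / \<gamma> + 2 * inner a e
      + (\<gamma> * (1 + \<omega>) + \<omega> * (\<gamma> * (1 + \<omega>) + 2 * \<mu>h)) * (norm e)\<^sup>2"
    using mono(2) by simp
  also have "\<dots> \<le> (1 / (1 + \<gamma> * \<mu>g)) * ((1 / \<gamma>) * (norm (x - xs))\<^sup>2)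
      + (1 - 2 * (1 / (\<gamma> * (1 + \<omega>))) * \<mu>h / ((1 + \<omega>) * (1 + 2 * (1 / (\<gamma> * (1 + \<omega>))) * \<mu>h)))
        * rp_dual_weight \<gamma> \<omega> \<mu>h * (norm e)\<^sup>2"
    unfolding rp_rate_dual_factor[OF \<gamma> \<omega> \<mu>h] using resolvent_step_bound[OF \<gamma> \<mu>g mono(1)]
    by (rule add_right_mono)
  also have "\<dots> \<le> rp_rate \<gamma> \<omega> \<mu>g \<mu>h * ((1 / \<gamma>) * (norm (x - xs))\<^sup>2)
      + rp_rate \<gamma> \<omega> \<mu>g \<mu>h * rp_dual_weight \<gamma> \<omega> \<mu>h * (norm e)\<^sup>2"
    using \<gamma> \<omega> \<mu>h unfolding rp_rate_def mult.assoc
    by (intro add_mono mult_right_mono) (auto simp: rp_dual_weight_def)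
  finally show ?thesis
    by (simp add: e_def rp_lyapunov_def distrib_left)
qed

section \<open>Conditional expectations\<close>

lemma integrable_if_nonneg_le:
  fixes f g :: "'s \<Rightarrow> real"
  assumes "integrable M g" "f \<in> borel_measurable M"
    and "\<And>s. s \<in> space M \<Longrightarrow> 0 \<le> f s" "\<And>s. s \<in> space M \<Longrightarrow> f s \<le> g s"
  shows "integrable M f"
  using assms by (intro Bochner_Integration.integrable_bound[OF assms(1,2)] AE_I2) fastforce

lemma (in sigma_finite_subalgebra) integral_le_if_nn_cond_exp_le:
  fixes f B :: "'a \<Rightarrow> real"
  assumes [measurable]: "f \<in> borel_measurable M" and f: "\<And>s. 0 \<le> f s"
    and B: "integrable M B" "\<And>s. 0 \<le> B s"
    and le: "AE s in M. nn_cond_exp M F (\<lambda>s. ennreal (f s)) s \<le> ennreal (B s)"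
  shows "integrable M f" "(\<integral>s. f s \<partial>M) \<le> (\<integral>s. B s \<partial>M)"
proof -
  have "(\<integral>\<^sup>+ s. ennreal (f s) \<partial>M) = (\<integral>\<^sup>+ s. 1 * nn_cond_exp M F (\<lambda>s. ennreal (f s)) s \<partial>M)"
    by (subst nn_cond_exp_intg) auto
  also have "\<dots> \<le> (\<integral>\<^sup>+ s. ennreal (B s) \<partial>M)"
    using le by (intro nn_integral_mono_AE) auto
  also have "\<dots> = ennreal (\<integral>s. B s \<partial>M)"
    using B by (intro nn_integral_eq_integral) auto
  finally have le_int: "(\<integral>\<^sup>+ s. ennreal (f s) \<partial>M) \<le> ennreal (\<integral>s. B s \<partial>M)" .
  then show int_f: "integrable M f"
    using f by (intro integrableI_nonneg) (auto simp: top.not_eq_extremum intro: le_less_trans)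
  have "ennreal (\<integral>s. f s \<partial>M) = (\<integral>\<^sup>+ s. ennreal (f s) \<partial>M)"
    using int_f f by (intro nn_integral_eq_integral[symmetric]) auto
  with le_int have "ennreal (\<integral>s. f s \<partial>M) \<le> ennreal (\<integral>s. B s \<partial>M)"
    by simp
  moreover have "0 \<le> (\<integral>s. B s \<partial>M)"
    using B by (intro integral_nonneg_AE) auto
  ultimately show "(\<integral>s. f s \<partial>M) \<le> (\<integral>s. B s \<partial>M)"
    by (simp add: ennreal_le_iff)
qed

lemma (in sigma_finite_subalgebra) integral_inner_cond_centered:
  fixes V \<delta> :: "'a \<Rightarrow> 'b::euclidean_space"
  assumes [measurable]: "V \<in> borel_measurable F" "\<delta> \<in> borel_measurable M"
    and V2: "integrable M (\<lambda>s. (norm (V s))\<^sup>2)" and \<delta>2: "integrable M (\<lambda>s. (norm (\<delta> s))\<^sup>2)"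
    and centered: "\<And>v. AE s in M. real_cond_exp M F (\<lambda>s. inner (\<delta> s) v) s = 0"
  shows "integrable M (\<lambda>s. inner (V s) (\<delta> s))" "(\<integral>s. inner (V s) (\<delta> s) \<partial>M) = 0"
proof -
  have [measurable]: "V \<in> borel_measurable M"
    by (rule measurable_from_subalg[OF subalg]) simp
  have int_i: "integrable M (\<lambda>s. inner (V s) i * inner (\<delta> s) i)" if i: "i \<in> Basis" for i
  proof (rule Bochner_Integration.integrable_bound[OF Bochner_Integration.integrable_add[OF V2 \<delta>2]])
    show "(\<lambda>s. inner (V s) i * inner (\<delta> s) i) \<in> borel_measurable M"
      by measurable
    have "\<bar>inner (V s) i * inner (\<delta> s) i\<bar> \<le> norm (V s) * norm (\<delta> s)" for s
      unfolding abs_mult using i by (intro mult_mono) (auto simp: Basis_le_norm)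
    also have "norm (V s) * norm (\<delta> s) \<le> (norm (V s))\<^sup>2 + (norm (\<delta> s))\<^sup>2" for s
      using sum_squares_bound[of "norm (V s)" "norm (\<delta> s)"] mult_nonneg_nonneg[OF norm_ge_zero norm_ge_zero, of "V s" "\<delta> s"]
      by linarith
    finally show "AE s in M. norm (inner (V s) i * inner (\<delta> s) i) \<le> norm ((norm (V s))\<^sup>2 + (norm (\<delta> s))\<^sup>2)"
      by simp
  qed
  have zero_i: "(\<integral>s. inner (V s) i * inner (\<delta> s) i \<partial>M) = 0" if i: "i \<in> Basis" for i
  proof -
    have "(\<integral>s. inner (V s) i * inner (\<delta> s) i \<partial>M)
        = (\<integral>s. inner (V s) i * real_cond_exp M F (\<lambda>s. inner (\<delta> s) i) s \<partial>M)"
      by (rule real_cond_exp_intg(2)[symmetric, OF int_i[OF i]]) measurable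
    also have "\<dots> = (\<integral>s. 0 \<partial>M)"
      using centered[of i] by (intro integral_cong_AE) (auto elim!: eventually_mono)
    finally show ?thesis
      by simp
  qed
  have inner_sum: "inner (V s) (\<delta> s) = (\<Sum>i\<in>Basis. inner (V s) i * inner (\<delta> s) i)" for s
    by (rule euclidean_inner)
  show "integrable M (\<lambda>s. inner (V s) (\<delta> s))"
    unfolding inner_sum using int_i by auto
  show "(\<integral>s. inner (V s) (\<delta> s) \<partial>M) = 0"
    unfolding inner_sum using int_i zero_i by (subst Bochner_Integration.integral_sum) auto
qed

lemma (in prob_space) cond_centered_if_unbiased:
  fixes d r :: "'a \<Rightarrow> 'b::euclidean_space"
  assumes sub: "subalgebra M F" and r_F: "r \<in> borel_measurable F" and d: "integrable M d"
    and sq: "integrable M (\<lambda>s. (norm (d s - r s))\<^sup>2)"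
    and unbiased: "AE s in M. real_cond_exp M F (\<lambda>s. inner (d s) v) s = inner (r s) v"
  shows "AE s in M. real_cond_exp M F (\<lambda>s. inner (d s - r s) v) s = 0"
proof -
  interpret finite_measure_subalgebra M F
    by (rule finite_measure_subalgebra.intro[OF finite_measure_axioms]) (unfold_locales, rule sub)
  have [measurable]: "r \<in> borel_measurable M" "d \<in> borel_measurable M"
    using measurable_from_subalg[OF sub r_F] borel_measurable_integrable[OF d] by simp_all
  have "integrable M (\<lambda>s. norm (d s - r s))"
    by (rule square_integrable_imp_integrable[OF _ sq]) simp
  then have "integrable M (\<lambda>s. d s - r s)"
    by (rule integrable_norm_cancel) simp
  with d have "integrable M (\<lambda>s. d s - (d s - r s))"
    by (rule Bochner_Integration.integrable_diff)
  then have r: "integrable M r"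
    by simp
  have "AE s in M. real_cond_exp M F (\<lambda>s. inner (d s) v - inner (r s) v) s
      = real_cond_exp M F (\<lambda>s. inner (d s) v) s - real_cond_exp M F (\<lambda>s. inner (r s) v) s"
    using d r by (intro real_cond_exp_diff) auto
  moreover have "AE s in M. real_cond_exp M F (\<lambda>s. inner (r s) v) s = inner (r s) v"
    using r r_F by (intro real_cond_exp_F_meas) auto
  ultimately show ?thesis
    using unbiased by eventually_elim (simp add: inner_diff_left)
qed

lemma (in prob_space) integral_quadratic_perturbation_le:
  fixes V d r :: "'a \<Rightarrow> 'b::euclidean_space" and Q P :: "'a \<Rightarrow> real"
  assumes sub: "subalgebra M F"
    and [measurable]: "Q \<in> borel_measurable M"
    and V_F [measurable]: "V \<in> borel_measurable F" and r_F [measurable]: "r \<in> borel_measurable F"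
    and d: "integrable M d" and P: "integrable M P"
    and Q: "\<And>s. 0 \<le> Q s" and bound: "\<And>s. s \<in> space M \<Longrightarrow> Q s + \<kappa> * \<omega> * (norm (r s))\<^sup>2 \<le> P s"
    and V: "\<And>s. (norm (V s))\<^sup>2 \<le> C * Q s"
    and \<kappa>: "\<kappa> > 0" and \<omega>: "\<omega> \<ge> 0"
    and unbiased: "\<And>v. AE s in M. real_cond_exp M F (\<lambda>s. inner (d s) v) s = inner (r s) v"
    and variance: "AE s in M. nn_cond_exp M F (\<lambda>s. ennreal ((norm (d s - r s))\<^sup>2)) s \<le> ennreal (\<omega> * (norm (r s))\<^sup>2)"
  shows "integrable M (\<lambda>s. Q s + inner (V s) (d s - r s) + \<kappa> * (norm (d s - r s))\<^sup>2)"
    "(\<integral>s. Q s + inner (V s) (d s - r s) + \<kappa> * (norm (d s - r s))\<^sup>2 \<partial>M) \<le> (\<integral>s. P s \<partial>M)"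
proof -
  interpret finite_measure_subalgebra M F
    by (rule finite_measure_subalgebra.intro[OF finite_measure_axioms]) (unfold_locales, rule sub)
  have [measurable]: "V \<in> borel_measurable M" "r \<in> borel_measurable M" "d \<in> borel_measurable M"
    using measurable_from_subalg[OF sub V_F] measurable_from_subalg[OF sub r_F] borel_measurable_integrable[OF d]
    by simp_all
  have "Q s \<le> P s" if "s \<in> space M" for s
  proof -
    have "0 \<le> \<kappa> * \<omega> * (norm (r s))\<^sup>2"
      using \<kappa> \<omega> by simp
    with bound[OF that] show ?thesis
      by linarith
  qed
  then have int_Q: "integrable M Q"
    using Q by (intro integrable_if_nonneg_le[OF P]) auto
  have int_r: "integrable M (\<lambda>s. \<omega> * (norm (r s))\<^sup>2)"
  proof (rule integrable_if_nonneg_le[where g="\<lambda>s. P s / \<kappa>"])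
    show "\<omega> * (norm (r s))\<^sup>2 \<le> P s / \<kappa>" if "s \<in> space M" for s
      using bound[OF that] Q[of s] \<kappa> by (simp add: pos_le_divide_eq algebra_simps)
  qed (use P \<omega> in auto)
  have int_V: "integrable M (\<lambda>s. (norm (V s))\<^sup>2)"
  proof (rule integrable_if_nonneg_le[where g="\<lambda>s. C * Q s"])
    show "integrable M (\<lambda>s. C * Q s)"
      using int_Q by simp
  qed (use V in simp_all)
  have int_dr: "integrable M (\<lambda>s. (norm (d s - r s))\<^sup>2)"
    and le_dr: "(\<integral>s. (norm (d s - r s))\<^sup>2 \<partial>M) \<le> (\<integral>s. \<omega> * (norm (r s))\<^sup>2 \<partial>M)"
    using integral_le_if_nn_cond_exp_le[OF _ _ int_r _ variance] \<omega> by (simp_all, measurable)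
  note centered = integral_inner_cond_centered[OF V_F _ int_V int_dr
      cond_centered_if_unbiased[OF sub r_F d int_dr unbiased]]
  show "integrable M (\<lambda>s. Q s + inner (V s) (d s - r s) + \<kappa> * (norm (d s - r s))\<^sup>2)"
    using int_Q centered(1) int_dr by simp
  have "(\<integral>s. Q s + inner (V s) (d s - r s) + \<kappa> * (norm (d s - r s))\<^sup>2 \<partial>M)
      = (\<integral>s. Q s \<partial>M) + \<kappa> * (\<integral>s. (norm (d s - r s))\<^sup>2 \<partial>M)"
    using int_Q centered int_dr by simp
  also have "\<dots> \<le> (\<integral>s. Q s \<partial>M) + \<kappa> * (\<integral>s. \<omega> * (norm (r s))\<^sup>2 \<partial>M)"
    using le_dr \<kappa> by simp
  also have "\<dots> = (\<integral>s. Q s + \<kappa> * \<omega> * (norm (r s))\<^sup>2 \<partial>M)"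
    using int_Q int_r by (simp add: mult.assoc)
  also have "\<dots> \<le> (\<integral>s. P s \<partial>M)"
    using int_Q int_r P bound by (intro integral_mono) (auto simp: mult.assoc)
  finally show "(\<integral>s. Q s + inner (V s) (d s - r s) + \<kappa> * (norm (d s - r s))\<^sup>2 \<partial>M) \<le> (\<integral>s. P s \<partial>M)" .
qed

lemma
  fixes X U :: "nat \<Rightarrow> 's \<Rightarrow> 'a::euclidean_space"
  assumes [measurable]: "\<And>k. X k \<in> borel_measurable M" "\<And>k. U k \<in> borel_measurable M"
  shows subalgebra_rp_filt: "subalgebra M (rp_filt M X U t)"
    and measurable_rp_filt: "(\<lambda>s. (X t s, U t s)) \<in> borel_measurable (rp_filt M X U t)"
proof -
  define G where "G = {(\<lambda>s. (X k s, U k s)) -` A \<inter> space M | k A. k \<le> t \<and> A \<in> sets (borel :: ('a \<times> 'a) measure)}"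
  have G: "G \<subseteq> sets M"
    by (auto simp: G_def)
  have "G \<subseteq> Pow (space M)"
    by (auto simp: G_def)
  moreover have "rp_filt M X U t = sigma (space M) G"
    by (simp add: rp_filt_def G_def)
  ultimately have space: "space (rp_filt M X U t) = space M" and sets: "sets (rp_filt M X U t) = sigma_sets (space M) G"
    by simp_all
  show "subalgebra M (rp_filt M X U t)"
    unfolding subalgebra_def space sets using sets.sigma_sets_subset[OF G] by simp
  show "(\<lambda>s. (X t s, U t s)) \<in> borel_measurable (rp_filt M X U t)"
  proof (rule measurableI)
    fix A :: "('a \<times> 'a) set" assume "A \<in> sets borel"
    then have "(\<lambda>s. (X t s, U t s)) -` A \<inter> space M \<in> G"
      unfolding G_def by blast
    then show "(\<lambda>s. (X t s, U t s)) -` A \<inter> space (rp_filt M X U t) \<in> sets (rp_filt M X U t)"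
      unfolding space sets by (rule sigma_sets.Basic)
  qed simp
qed

section \<open>Convergence of RandProx-ADMM\<close>

lemma LIMSEQ_if_norm_sq_le_null:
  fixes f :: "nat \<Rightarrow> 'a::real_normed_vector"
  assumes P: "P \<longlonglongrightarrow> 0" and le: "\<And>t. (norm (f t - l))\<^sup>2 \<le> K * P t"
  shows "f \<longlonglongrightarrow> l"
proof -
  have KP: "(\<lambda>t. K * P t) \<longlonglongrightarrow> 0"
    using tendsto_mult[OF tendsto_const P, of K] by simp
  have "(\<lambda>t. (norm (f t - l))\<^sup>2) \<longlonglongrightarrow> 0"
  proof (rule tendsto_sandwich[of "\<lambda>_. 0" _ _ "\<lambda>t. K * P t"])
    show "\<forall>\<^sub>F t in sequentially. (norm (f t - l))\<^sup>2 \<le> K * P t"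
      using le by simp
  qed (use KP in simp_all)
  then have "(\<lambda>t. norm (f t - l)) \<longlonglongrightarrow> 0"
    using tendsto_real_sqrt by fastforce
  then show ?thesis
    unfolding tendsto_norm_zero_iff by (rule LIM_zero_cancel)
qed

lemma AE_summable_if_summable_nn_integral:
  fixes f :: "nat \<Rightarrow> 's \<Rightarrow> real"
  assumes [measurable]: "\<And>t. f t \<in> borel_measurable M" and f: "\<And>t s. 0 \<le> f t s"
    and b: "summable b" "\<And>t. 0 \<le> b t" and le: "\<And>t. (\<integral>\<^sup>+ s. ennreal (f t s) \<partial>M) \<le> ennreal (b t)"
  shows "AE s in M. summable (\<lambda>t. f t s)"
proof -
  have "(\<integral>\<^sup>+ s. (\<Sum>t. ennreal (f t s)) \<partial>M) = (\<Sum>t. \<integral>\<^sup>+ s. ennreal (f t s) \<partial>M)"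
    by (rule nn_integral_suminf) measurable
  also have "\<dots> \<le> (\<Sum>t. ennreal (b t))"
    by (intro suminf_le le summableI)
  also have "\<dots> = ennreal (\<Sum>t. b t)"
    using b by (intro suminf_ennreal2) auto
  finally have "(\<integral>\<^sup>+ s. (\<Sum>t. ennreal (f t s)) \<partial>M) \<noteq> \<infinity>"
    by (auto simp: top_unique)
  then have "AE s in M. (\<Sum>t. ennreal (f t s)) \<noteq> \<infinity>"
    by (intro nn_integral_noteq_infinite) measurable
  then show ?thesis
    by eventually_elim (use f in \<open>auto intro: summable_suminf_not_top\<close>)
qed

locale randprox_admm = prob_space M for M :: "'s measure" +
  fixes g h :: "'a::euclidean_space \<Rightarrow> ereal" and \<mu>g \<mu>h \<gamma> \<omega> :: real and xs us x0 u0 :: 'a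
    and R :: "nat \<Rightarrow> 's \<Rightarrow> 'a \<Rightarrow> 'a" and X U :: "nat \<Rightarrow> 's \<Rightarrow> 'a"
  assumes X_def: "X = rp_x \<gamma> \<omega> g h R x0 u0" and U_def: "U = rp_u \<gamma> \<omega> g h R x0 u0"
    and adm_g: "prox_admissible g" and adm_h: "prox_admissible h"
    and sc_g: "strongly_convex_fun \<mu>g g" and sc_h: "strongly_convex_fun \<mu>h (conj_fun h)"
    and \<mu>g: "\<mu>g > 0" and \<mu>h: "\<mu>h > 0" and \<gamma>: "\<gamma> > 0" and \<omega>: "\<omega> \<ge> 0"
    and g_xs: "- us \<in> subdiff g xs" and h_us: "xs \<in> subdiff (conj_fun h) us"
    and integrable_R: "\<And>t. integrable M (\<lambda>s. R t s (rp_res \<gamma> \<omega> g h (X t s) (U t s)))"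
    and unbiased: "\<And>t v. AE s in M. real_cond_exp M (rp_filt M X U t)
        (\<lambda>s. inner (R t s (rp_res \<gamma> \<omega> g h (X t s) (U t s))) v) s = inner (rp_res \<gamma> \<omega> g h (X t s) (U t s)) v"
    and variance: "\<And>t. AE s in M. nn_cond_exp M (rp_filt M X U t)
        (\<lambda>s. ennreal ((norm (R t s (rp_res \<gamma> \<omega> g h (X t s) (U t s)) - rp_res \<gamma> \<omega> g h (X t s) (U t s)))\<^sup>2)) s
          \<le> ennreal (\<omega> * (norm (rp_res \<gamma> \<omega> g h (X t s) (U t s)))\<^sup>2)"
begin

abbreviation "res t s \<equiv> rp_res \<gamma> \<omega> g h (X t s) (U t s)"
abbreviation "lyap t s \<equiv> rp_lyapunov \<gamma> \<omega> \<mu>h xs us (X t s) (U t s)"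
abbreviation "rate \<equiv> rp_rate \<gamma> \<omega> \<mu>g \<mu>h"

lemma X_0: "X 0 = (\<lambda>s. x0)" and U_0: "U 0 = (\<lambda>s. u0)"
  by (simp_all add: X_def U_def fun_eq_iff)

lemma X_Suc: "X (Suc t) s = rp_xhat \<gamma> g (X t s) (U t s) - (1 / (1 + \<omega>)) *\<^sub>R R t s (res t s)"
  and U_Suc: "U (Suc t) s = U t s + (1 / (\<gamma> * (1 + \<omega>)\<^sup>2)) *\<^sub>R R t s (res t s)"
  by (simp_all add: X_def U_def rp_x_Suc rp_u_Suc)

lemma measurable_X_U [measurable]: "X t \<in> borel_measurable M" "U t \<in> borel_measurable M"
proof (induction t)
  case 0
  show "X 0 \<in> borel_measurable M" "U 0 \<in> borel_measurable M"
    by (simp_all add: X_0 U_0)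
next
  case (Suc t)
  note Suc.IH [measurable]
  have [measurable]: "(\<lambda>s. R t s (res t s)) \<in> borel_measurable M"
    using integrable_R by (rule borel_measurable_integrable)
  have [measurable]: "(\<lambda>s. rp_xhat \<gamma> g (X t s) (U t s)) \<in> borel_measurable M"
    using continuous_on_rp_xhat[OF adm_g \<gamma>]
    by (intro borel_measurable_continuous_Pair[where H="rp_xhat \<gamma> g"]) (simp_all add: case_prod_beta)
  have "X (Suc t) = (\<lambda>s. rp_xhat \<gamma> g (X t s) (U t s) - (1 / (1 + \<omega>)) *\<^sub>R R t s (res t s))"
    and "U (Suc t) = (\<lambda>s. U t s + (1 / (\<gamma> * (1 + \<omega>)\<^sup>2)) *\<^sub>R R t s (res t s))"
    by (simp_all add: fun_eq_iff X_Suc U_Suc)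
  then show "X (Suc t) \<in> borel_measurable M" "U (Suc t) \<in> borel_measurable M"
    by (simp_all only:) measurable
qed

lemma subalgebra_filtration: "subalgebra M (rp_filt M X U t)"
  by (rule subalgebra_rp_filt) (rule measurable_X_U)+

lemma measurable_filtration_state:
  assumes "continuous_on UNIV f"
  shows "(\<lambda>s. f (X t s, U t s)) \<in> borel_measurable (rp_filt M X U t)"
proof -
  have "(\<lambda>s. (X t s, U t s)) \<in> borel_measurable (rp_filt M X U t)"
    by (rule measurable_rp_filt) (rule measurable_X_U)+
  then show ?thesis
    using borel_measurable_continuous_onI[OF assms] by (rule measurable_compose)
qed

text \<open>The conditional mean of the next iterate given the past, by unbiasedness of \<open>R\<close>.\<close>
definition mean_x :: "'a \<times> 'a \<Rightarrow> 'a" where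
  "mean_x = (\<lambda>(x, u). rp_xhat \<gamma> g x u - (1 / (1 + \<omega>)) *\<^sub>R rp_res \<gamma> \<omega> g h x u)"

definition mean_u :: "'a \<times> 'a \<Rightarrow> 'a" where
  "mean_u = (\<lambda>(x, u). u + (1 / (\<gamma> * (1 + \<omega>)\<^sup>2)) *\<^sub>R rp_res \<gamma> \<omega> g h x u)"

definition lyap_grad :: "'a \<times> 'a \<Rightarrow> 'a" where
  "lyap_grad p = (- (2 * (1 / \<gamma>) * (1 / (1 + \<omega>)))) *\<^sub>R (mean_x p - xs)
     + (2 * rp_dual_weight \<gamma> \<omega> \<mu>h * (1 / (\<gamma> * (1 + \<omega>)\<^sup>2))) *\<^sub>R (mean_u p - us)"

lemma continuous_on_mean: "continuous_on UNIV mean_x" "continuous_on UNIV mean_u"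
  using continuous_on_rp_xhat[OF adm_g \<gamma>] continuous_on_rp_res[OF adm_g adm_h \<gamma> \<omega>]
  unfolding mean_x_def mean_u_def case_prod_beta by (auto intro!: continuous_intros)

lemma lyap_Suc_eq:
  "lyap (Suc t) s = rp_lyapunov \<gamma> \<omega> \<mu>h xs us (mean_x (X t s, U t s)) (mean_u (X t s, U t s))
     + inner (lyap_grad (X t s, U t s)) (R t s (res t s) - res t s)
     + rp_noise_weight \<gamma> \<omega> \<mu>h * (norm (R t s (res t s) - res t s))\<^sup>2"
proof -
  have "X (Suc t) s - xs = (mean_x (X t s, U t s) - xs) - (1 / (1 + \<omega>)) *\<^sub>R (R t s (res t s) - res t s)"
    and "U (Suc t) s - us = (mean_u (X t s, U t s) - us) + (1 / (\<gamma> * (1 + \<omega>)\<^sup>2)) *\<^sub>R (R t s (res t s) - res t s)"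
    by (simp_all add: X_Suc U_Suc mean_x_def mean_u_def algebra_simps)
  then have "lyap (Suc t) s
      = (1 / \<gamma>) * (norm ((mean_x (X t s, U t s) - xs) - (1 / (1 + \<omega>)) *\<^sub>R (R t s (res t s) - res t s)))\<^sup>2
        + rp_dual_weight \<gamma> \<omega> \<mu>h
          * (norm ((mean_u (X t s, U t s) - us) + (1 / (\<gamma> * (1 + \<omega>)\<^sup>2)) *\<^sub>R (R t s (res t s) - res t s)))\<^sup>2"
    by (simp only: rp_lyapunov_def)
  then show ?thesis
    unfolding weighted_norms_shift by (simp add: rp_lyapunov_def lyap_grad_def rp_noise_weight_def)
qed

lemma norm_lyap_grad_le:
  "(norm (lyap_grad p))\<^sup>2 \<le> (2 * (- (2 * (1 / \<gamma>) * (1 / (1 + \<omega>))))\<^sup>2 / (1 / \<gamma>)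
     + 2 * (2 * rp_dual_weight \<gamma> \<omega> \<mu>h * (1 / (\<gamma> * (1 + \<omega>)\<^sup>2)))\<^sup>2 / rp_dual_weight \<gamma> \<omega> \<mu>h)
     * rp_lyapunov \<gamma> \<omega> \<mu>h xs us (mean_x p) (mean_u p)"
  unfolding lyap_grad_def rp_lyapunov_def using \<gamma> rp_weights_pos[OF \<gamma> \<omega> less_imp_le[OF \<mu>h]]
  by (intro norm_sq_combination_le) simp_all

lemma lyapunov_step:
  assumes int: "integrable M (lyap t)"
  shows "integrable M (lyap (Suc t))" "(\<integral>s. lyap (Suc t) s \<partial>M) \<le> rate * (\<integral>s. lyap t s \<partial>M)"
proof -
  have cont_lyap_mean: "continuous_on UNIV (\<lambda>p. rp_lyapunov \<gamma> \<omega> \<mu>h xs us (mean_x p) (mean_u p))"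
    and cont_grad: "continuous_on UNIV lyap_grad"
    unfolding rp_lyapunov_def lyap_grad_def using continuous_on_mean \<gamma>
    by (auto intro!: continuous_intros)
  have res_meas: "(\<lambda>s. res t s) \<in> borel_measurable (rp_filt M X U t)"
    using measurable_filtration_state[OF continuous_on_rp_res[OF adm_g adm_h \<gamma> \<omega>]] by simp
  have bound: "rp_lyapunov \<gamma> \<omega> \<mu>h xs us (mean_x (X t s, U t s)) (mean_u (X t s, U t s))
      + rp_noise_weight \<gamma> \<omega> \<mu>h * \<omega> * (norm (res t s))\<^sup>2 \<le> rate * lyap t s" for s
    using rp_lyapunov_contraction[OF adm_g adm_h sc_g sc_h \<gamma> \<omega> less_imp_le[OF \<mu>g] less_imp_le[OF \<mu>h] g_xs h_us]
    by (simp add: mean_x_def mean_u_def algebra_simps)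
  note step = integral_quadratic_perturbation_le[OF subalgebra_filtration
      measurable_from_subalg[OF subalgebra_filtration measurable_filtration_state[OF cont_lyap_mean]]
      measurable_filtration_state[OF cont_grad] res_meas integrable_R integrable_mult_right[OF int]
      rp_lyapunov_nonneg[OF \<gamma> \<omega> less_imp_le[OF \<mu>h]] bound norm_lyap_grad_le
      rp_weights_pos(2)[OF \<gamma> \<omega> less_imp_le[OF \<mu>h]] \<omega> unbiased variance]
  show "integrable M (lyap (Suc t))" "(\<integral>s. lyap (Suc t) s \<partial>M) \<le> rate * (\<integral>s. lyap t s \<partial>M)"
    using step by (simp_all add: lyap_Suc_eq)
qed

lemma lyap_nonneg: "0 \<le> lyap t s"
  using \<gamma> \<omega> \<mu>h by (intro rp_lyapunov_nonneg) auto

lemma expected_lyapunov: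
  "integrable M (lyap t) \<and> (\<integral>s. lyap t s \<partial>M) \<le> rate ^ t * rp_lyapunov \<gamma> \<omega> \<mu>h xs us x0 u0"
proof (induction t)
  case 0
  then show ?case
    by (simp add: X_0 U_0 prob_space)
next
  case (Suc t)
  then have "(\<integral>s. lyap (Suc t) s \<partial>M) \<le> rate * (rate ^ t * rp_lyapunov \<gamma> \<omega> \<mu>h xs us x0 u0)"
    using lyapunov_step(2) rp_rate_bounds(1)[OF \<gamma> \<omega> \<mu>g \<mu>h] by (meson mult_left_mono order_trans)
  with Suc lyapunov_step(1) show ?case
    by simp
qed

lemma nn_integral_lyapunov_le:
  "(\<integral>\<^sup>+ s. ennreal (lyap t s) \<partial>M) \<le> ennreal (rate ^ t * rp_lyapunov \<gamma> \<omega> \<mu>h xs us x0 u0)"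
proof -
  have "(\<integral>\<^sup>+ s. ennreal (lyap t s) \<partial>M) = ennreal (\<integral>s. lyap t s \<partial>M)"
    using expected_lyapunov[of t] by (intro nn_integral_eq_integral) (auto simp: lyap_nonneg)
  also have "\<dots> \<le> ennreal (rate ^ t * rp_lyapunov \<gamma> \<omega> \<mu>h xs us x0 u0)"
    using expected_lyapunov[of t] by (intro ennreal_leI) auto
  finally show ?thesis .
qed

lemma AE_tendsto:
  "AE s in M. (\<lambda>t. X t s) \<longlonglongrightarrow> xs \<and> (\<lambda>t. rp_xhat \<gamma> g (X t s) (U t s)) \<longlonglongrightarrow> xs
                \<and> (\<lambda>t. U t s) \<longlonglongrightarrow> us"
proof -
  have W: "rp_dual_weight \<gamma> \<omega> \<mu>h > 0"
    using rp_weights_pos[OF \<gamma> \<omega> less_imp_le[OF \<mu>h]] by simp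
  have "summable (\<lambda>t. rate ^ t * rp_lyapunov \<gamma> \<omega> \<mu>h xs us x0 u0)"
    using rp_rate_bounds[OF \<gamma> \<omega> \<mu>g \<mu>h] by (intro summable_mult2 summable_geometric) simp
  moreover have "0 \<le> rate ^ t * rp_lyapunov \<gamma> \<omega> \<mu>h xs us x0 u0" for t
    by (intro mult_nonneg_nonneg zero_le_power rp_rate_bounds(1)[OF \<gamma> \<omega> \<mu>g \<mu>h]
        rp_lyapunov_nonneg[OF \<gamma> \<omega> less_imp_le[OF \<mu>h]])
  moreover have "lyap t \<in> borel_measurable M" for t
    using expected_lyapunov[of t] by (auto intro: borel_measurable_integrable)
  ultimately have "AE s in M. summable (\<lambda>t. lyap t s)"
    using lyap_nonneg nn_integral_lyapunov_le by (intro AE_summable_if_summable_nn_integral) auto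
  then show ?thesis
  proof eventually_elim
    case (elim s)
    then have lyap_0: "(\<lambda>t. lyap t s) \<longlonglongrightarrow> 0"
      by (rule summable_LIMSEQ_zero)
    have X: "(\<lambda>t. X t s) \<longlonglongrightarrow> xs"
      using \<gamma> W by (intro LIMSEQ_if_norm_sq_le_null[OF lyap_0, of _ _ \<gamma>]) (simp add: rp_lyapunov_def field_simps)
    have U: "(\<lambda>t. U t s) \<longlonglongrightarrow> us"
      using \<gamma> W by (intro LIMSEQ_if_norm_sq_le_null[OF lyap_0, of _ _ "1 / rp_dual_weight \<gamma> \<omega> \<mu>h"])
        (simp add: rp_lyapunov_def field_simps)
    have "isCont (\<lambda>(x, u). rp_xhat \<gamma> g x u) (xs, us)"
      using continuous_on_rp_xhat[OF adm_g \<gamma>] by (simp add: continuous_on_eq_continuous_at)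
    from isCont_tendsto_compose[OF this tendsto_Pair[OF X U]]
    have "(\<lambda>t. rp_xhat \<gamma> g (X t s) (U t s)) \<longlonglongrightarrow> rp_xhat \<gamma> g xs us"
      by simp
    with X U show ?case
      by (simp add: rp_xhat_fixed_point[OF adm_g \<gamma> g_xs])
  qed
qed

end

theorem theorem8:
  fixes g h :: "'a::euclidean_space \<Rightarrow> ereal"
    and \<mu>g \<mu>hs \<gamma> \<omega> :: real
    and x0 u0 xs us :: 'a
    and M :: "'s measure"
    and R :: "nat \<Rightarrow> 's \<Rightarrow> 'a \<Rightarrow> 'a"
  defines "X \<equiv> rp_x \<gamma> \<omega> g h R x0 u0"
    and "U \<equiv> rp_u \<gamma> \<omega> g h R x0 u0"
    and "\<Psi> \<equiv> \<lambda>x u. (1 / \<gamma>) * (norm (x - xs))\<^sup>2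
                   + (1 + \<omega>) * (\<gamma> * (1 + \<omega>) + 2 * \<mu>hs) * (norm (u - us))\<^sup>2"
    and "c \<equiv> max (1 / (1 + \<gamma> * \<mu>g))
                 (1 - 2 * (1 / (\<gamma> * (1 + \<omega>))) * \<mu>hs
                        / ((1 + \<omega>) * (1 + 2 * (1 / (\<gamma> * (1 + \<omega>))) * \<mu>hs)))"
  assumes M: "prob_space M"
    and g: "proper_fun g" "closed_fun g" "convex_fun g"
    and h: "proper_fun h" "closed_fun h" "convex_fun h"
    and sc_g: "strongly_convex_fun \<mu>g g"
    and sc_hs: "strongly_convex_fun \<mu>hs (conj_fun h)"
    and pos: "\<mu>g > 0" "\<mu>hs > 0" "\<gamma> > 0" "\<omega> \<ge> 0"
    and kkt: "\<exists>x u. - u \<in> subdiff g x \<and> x \<in> subdiff (conj_fun h) u"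
    and primal_sol: "\<forall>x. g xs + h xs \<le> g x + h x"
    and dual_sol: "\<forall>u. conj_fun g (- us) + conj_fun h us \<le> conj_fun g (- u) + conj_fun h u"
    and integrable: "\<forall>t. integrable M (\<lambda>s. R t s (rp_res \<gamma> \<omega> g h (X t s) (U t s)))"
    and unbiased: "\<forall>t v. AE s in M. real_cond_exp M (rp_filt M X U t) (\<lambda>s. inner (R t s (rp_res \<gamma> \<omega> g h (X t s) (U t s))) v) s = inner (rp_res \<gamma> \<omega> g h (X t s) (U t s)) v"
    and variance: "\<forall>t. AE s in M. nn_cond_exp M (rp_filt M X U t) (\<lambda>s. ennreal ((norm (R t s (rp_res \<gamma> \<omega> g h (X t s) (U t s)) - rp_res \<gamma> \<omega> g h (X t s) (U t s)))\<^sup>2)) s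
                                   \<le> ennreal (\<omega> * (norm (rp_res \<gamma> \<omega> g h (X t s) (U t s)))\<^sup>2)"
  shows "c = 1 - min (\<gamma> * \<mu>g / (1 + \<gamma> * \<mu>g))
                     (2 * (1 / (\<gamma> * (1 + \<omega>))) * \<mu>hs / ((1 + \<omega>) * (1 + 2 * (1 / (\<gamma> * (1 + \<omega>))) * \<mu>hs)))
         \<and> c < 1
         \<and> (\<forall>t. (\<integral>\<^sup>+ s. ennreal (\<Psi> (X t s) (U t s)) \<partial>M) \<le> ennreal (c ^ t * \<Psi> x0 u0))
         \<and> (AE s in M. (\<lambda>t. X t s) \<longlonglongrightarrow> xs \<and> (\<lambda>t. rp_xhat \<gamma> g (X t s) (U t s)) \<longlonglongrightarrow> xs
                       \<and> (\<lambda>t. U t s) \<longlonglongrightarrow> us)"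
proof -
  have adm_g: "prox_admissible g" and adm_h: "prox_admissible h"
    and g_xs: "- us \<in> subdiff g xs" and h_us: "xs \<in> subdiff (conj_fun h) us"
    using kkt_at_solutions[OF g(2,3) h sc_g sc_hs pos(1,2) kkt primal_sol dual_sol] by blast+
  interpret randprox_admm M g h \<mu>g \<mu>hs \<gamma> \<omega> xs us x0 u0 R X U
    using M adm_g adm_h sc_g sc_hs pos g_xs h_us integrable unbiased variance
    by (intro randprox_admm.intro randprox_admm_axioms.intro) (simp_all add: X_def U_def)
  have "\<Psi> = rp_lyapunov \<gamma> \<omega> \<mu>hs xs us"
    by (simp add: \<Psi>_def rp_lyapunov_def rp_dual_weight_def fun_eq_iff)
  moreover have "c = rp_rate \<gamma> \<omega> \<mu>g \<mu>hs"
    unfolding c_def rp_rate_def ..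
  ultimately show ?thesis
    using rp_rate_eq[OF pos(3) less_imp_le[OF pos(1)]] rp_rate_bounds(2)[OF pos(3,4,1,2)]
      nn_integral_lyapunov_le AE_tendsto
    by simp
qed

end
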